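(* Assume the standing assumptions (P1)–(P6) described in the context, and let $(f_0,t_0)\in\mathrm{Dom}\,\mathcal P$. Then there exist $R',T',\mathcal E,\ell$ such that: (i) $R'\in(0,+\infty]$, $T'\in(t_0,+\infty]$ and $B(f_0,R')\times[t_0,T')\subset\mathrm{Dom}\,\mathcal P$; (ii) $\mathcal E\in C([t_0,T'),[0,+\infty))$, $\mathcal E(t_0)=0$, and $\|f_0-e^{(t-t_0)\mathcal A}f_0-\int_{t_0}^t e^{(t-s)\mathcal A}\mathcal P(f_0,s)\,ds\|\le\mathcal E(t)$ for all $t\in[t_0,T')$; (iii) $\ell\in C([0,R')\times[t_0,T'),[0,+\infty))$ is nondecreasing in its first variable and $\|\mathcal P(f,t)-\mathcal P(f_0,t)\|_-\le\ell(\|f-f_0\|,t)$ for all $(f,t)\in B(f_0,R')\times[t_0,T')$. Moreover, for any $R',T',\mathcal E,\ell$ satisfying (i)–(iii): (a) there exist $R\in(0,R')$ and $T\in(t_0,T']$ such that $\mathcal E(t)+\int_{t_0}^t u_-(t-s)\,\ell(R,s)\,ds\le R$ for all $t\in[t_0,T)$; (b) for any such $R,T$, the Volterra problem VP$(f_0,t_0)$ has a solution $\varphi$ on $[t_0,T)$, and $\|\varphi(t)-f_0\|\le R$ for all $t\in[t_0,T)$.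
   Context: All Banach spaces are over a common field ($\mathbb R$ or $\mathbb C$). For Banach spaces $X,Y$, $X\hookrightarrow Y$ means that $X$ is a dense linear subspace of $Y$ and the inclusion is continuous. Standing assumptions: (P1) $F_+,F,F_-$ are Banach spaces with norms $\|\cdot\|_+,\|\cdot\|,\|\cdot\|_-$ and $F_+\hookrightarrow F\hookrightarrow F_-$; $B(f_0,r):=\{f\in F:\|f-f_0\|<r\}$ for $r\in(0,+\infty]$. (P2) $\mathcal A:F_+\to F_-$ is linear and on $F_+$ the norm $\|\cdot\|_+$ is equivalent to $f\mapsto\|f\|_-+\|\mathcal Af\|_-$. (P3) $\mathcal A$, viewed as a densely defined operator in $F_-$ with domain $F_+$, generates a strongly continuous semigroup $(e^{t\mathcal A})_{t\ge0}$ on $F_-$. (P4) $e^{t\mathcal A}(F)\subset F$ for $t\ge0$, the map $(f,t)\mapsto e^{t\mathcal A}f$ is continuous from $F\times[0,\infty)$ to $F$, and $u\in C([0,\infty),(0,\infty))$ satisfies $\|e^{t\mathcal A}f\|\le u(t)\|f\|$. (P5) $e^{t\mathcal A}(F_-)\subset F$ for $t>0$, the map $(f,t)\mapsto e^{t\mathcal A}f$ is continuous from $F_-\times(0,\infty)$ to $F$, and $u_-\in C((0,\infty),(0,\infty))$ satisfies $\|e^{t\mathcal A}f\|\le u_-(t)\|f\|_-$ for $t>0$, $f\in F_-$, with $u_-(t)=O(t^{-(1-\sigma)})$ as $t\to0^+$ for some $\sigma\in(0,1]$. (P6) $\mathcal P:\mathrm{Dom}\,\mathcal P\subset F\times\mathbb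 R\to F_-$; the domain is semi-open (for each $(f_0,t_0)\in\mathrm{Dom}\,\mathcal P$ there are $\delta,r\in(0,+\infty]$ with $B(f_0,r)\times[t_0,t_0+\delta)\subset\mathrm{Dom}\,\mathcal P$), and for every closed bounded $\mathcal C\subset F\times\mathbb R$ with $\mathcal C\subset\mathrm{Dom}\,\mathcal P$ there are $L,M\ge0$ with $\|\mathcal P(f,t)-\mathcal P(f',t')\|_-\le L\|f-f'\|+M|t-t'|$ for all $(f,t),(f',t')\in\mathcal C$. For $(f_0,t_0)\in\mathrm{Dom}\,\mathcal P$, a solution of the Volterra problem VP$(f_0,t_0)$ on $[t_0,T)$ ($T\in(t_0,+\infty]$) is a $\varphi\in C([t_0,T),F)$ whose graph $\{(\varphi(t),t)\}$ lies in $\mathrm{Dom}\,\mathcal P$ and such that $\varphi(t)=e^{(t-t_0)\mathcal A}f_0+\int_{t_0}^t e^{(t-s)\mathcal A}\mathcal P(\varphi(s),s)\,ds$ for all $t\in[t_0,T)$. *)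

theory Defs
  imports "HOL-Analysis.Analysis" "HOL-Library.Landau_Symbols"
begin

definition Ico_e :: "real \<Rightarrow> ereal \<Rightarrow> real set" where
  "Ico_e a b = {t. a \<le> t \<and> ereal t < b}"

definition ball_e :: "'a::metric_space \<Rightarrow> ereal \<Rightarrow> 'a set" where
  "ball_e x r = {y. ereal (dist y x) < r}"

definition dense_embedding :: "('a::real_normed_vector \<Rightarrow> 'b::real_normed_vector) \<Rightarrow> bool" where
  "dense_embedding i \<longleftrightarrow> bounded_linear i \<and> inj i \<and> closure (range i) = UNIV"

definition c0_semigroup :: "(real \<Rightarrow> 'a::real_normed_vector \<Rightarrow> 'a) \<Rightarrow> bool" where
  "c0_semigroup S \<longleftrightarrow>
     (\<forall>t\<ge>0. bounded_linear (S t)) \<and> S 0 = id \<and>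
     (\<forall>t\<ge>0. \<forall>s\<ge>0. S (t + s) = S t \<circ> S s) \<and>
     (\<forall>x. continuous_on {0..} (\<lambda>t. S t x))"

text \<open>The operator with domain range J, J p \<mapsto> A p, is the generator of S.\<close>
definition generates :: "(real \<Rightarrow> 'a::real_normed_vector \<Rightarrow> 'a) \<Rightarrow> ('p \<Rightarrow> 'a) \<Rightarrow> ('p \<Rightarrow> 'a) \<Rightarrow> bool" where
  "generates S J A \<longleftrightarrow> c0_semigroup S \<and>
     (\<forall>x. x \<in> range J \<longleftrightarrow> (\<exists>y. ((\<lambda>h. (S h x - x) /\<^sub>R h) \<longlongrightarrow> y) (at_right 0))) \<and>
     (\<forall>p. ((\<lambda>h. (S h (J p) - J p) /\<^sub>R h) \<longlongrightarrow> A p) (at_right 0))"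

text \<open>Solution of VP(f0,t0) on [t0,T).  SF t f = e^{tA} f on F (t \<ge> 0),
  Em t g = e^{tA} g : F_- \<rightarrow> F (t > 0).\<close>
definition VP_solution ::
  "(real \<Rightarrow> 'f::real_normed_vector \<Rightarrow> 'f) \<Rightarrow> (real \<Rightarrow> 'm \<Rightarrow> 'f) \<Rightarrow> ('f \<Rightarrow> real \<Rightarrow> 'm)
   \<Rightarrow> ('f \<times> real) set \<Rightarrow> 'f \<Rightarrow> real \<Rightarrow> ereal \<Rightarrow> (real \<Rightarrow> 'f) \<Rightarrow> bool" where
  "VP_solution SF Em P D f0 t0 T \<phi> \<longleftrightarrow>
     ereal t0 < T \<and> continuous_on (Ico_e t0 T) \<phi> \<and>
     (\<forall>t\<in>Ico_e t0 T. (\<phi> t, t) \<in> D \<and>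
        ((\<lambda>s. Em (t - s) (P (\<phi> s) s)) has_integral (\<phi> t - SF (t - t0) f0)) {t0..t})"

definition local_data ::
  "(real \<Rightarrow> 'f::real_normed_vector \<Rightarrow> 'f) \<Rightarrow> (real \<Rightarrow> 'm::real_normed_vector \<Rightarrow> 'f) \<Rightarrow> ('f \<Rightarrow> real \<Rightarrow> 'm)
   \<Rightarrow> ('f \<times> real) set \<Rightarrow> 'f \<Rightarrow> real
   \<Rightarrow> ereal \<Rightarrow> ereal \<Rightarrow> (real \<Rightarrow> real) \<Rightarrow> (real \<Rightarrow> real \<Rightarrow> real) \<Rightarrow> bool" where
  "local_data SF Em P D f0 t0 R' T' Er ell \<longleftrightarrow>
     0 < R' \<and> ereal t0 < T' \<and> ball_e f0 R' \<times> Ico_e t0 T' \<subseteq> D \<and>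
     continuous_on (Ico_e t0 T') Er \<and> (\<forall>t\<in>Ico_e t0 T'. 0 \<le> Er t) \<and> Er t0 = 0 \<and>
     (\<forall>t\<in>Ico_e t0 T'.
        norm (f0 - SF (t - t0) f0 - integral {t0..t} (\<lambda>s. Em (t - s) (P f0 s))) \<le> Er t) \<and>
     continuous_on (Ico_e 0 R' \<times> Ico_e t0 T') (\<lambda>(r, t). ell r t) \<and>
     (\<forall>r\<in>Ico_e 0 R'. \<forall>t\<in>Ico_e t0 T'. 0 \<le> ell r t) \<and>
     (\<forall>t\<in>Ico_e t0 T'. mono_on (Ico_e 0 R') (\<lambda>r. ell r t)) \<and>
     (\<forall>f\<in>ball_e f0 R'. \<forall>t\<in>Ico_e t0 T'. norm (P f t - P f0 t) \<le> ell (norm (f - f0)) t)"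

end

theory Submission
  imports Defs
begin

text \<open>
  The Volterra equation is solved by Picard iteration. Near \<open>\<tau> = 0\<close> the kernel bound
  \<open>u_m \<tau>\<close> is at most a multiple of \<open>\<tau> powr (\<sigma> - 1)\<close>, which is integrable; hence every
  convolution \<open>\<integral>\<^sub>t\<^sub>0\<^sup>t Em (t - s) (g s) ds\<close> with continuous \<open>g\<close> exists as an improper
  Henstock--Kurzweil integral and is continuous in \<open>t\<close>. On a compact interval \<open>[t0, c]\<close> the
  budget condition \<open>\<E> t + \<integral>\<^sub>t\<^sub>0\<^sup>t u_m (t - s) \<ell>(R, s) ds \<le> R\<close> keeps the Picard map inside
  the continuous functions with values in the closed ball of radius \<open>R\<close> around \<open>f0\<close>, and in
  the weighted norm \<open>sup e\<^sup>-\<^sup>\<mu>\<^sup>(\<^sup>t\<^sup>-\<^sup>t\<^sup>0\<^sup>) \<parallel>\<phi> t\<parallel>\<close> with \<open>\<mu>\<close> large it is a contraction with constant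
  \<open>1/2\<close>. The unique solutions on the intervals \<open>[t0, c]\<close>, \<open>c < T\<close>, glue to a solution on
  \<open>[t0, T)\<close>. The data of (i) come from the Lipschitz bound of \<open>P\<close> on a small cylinder around
  \<open>(f0, t0)\<close>, and the pair \<open>R, T\<close> of (a) from continuity of \<open>\<E>\<close> at \<open>t0\<close> together with the
  integrability of the kernel.
\<close>

section \<open>Integrals with a weakly singular kernel\<close>

lemma has_integral_powr_kernel:
  fixes \<sigma> b c c' :: real
  assumes "0 < \<sigma>" "c \<le> c'" "c' \<le> b"
  shows "((\<lambda>s. (b - s) powr (\<sigma> - 1)) has_integral ((b - c) powr \<sigma> - (b - c') powr \<sigma>) / \<sigma>) {c..c'}"
proof -
  define F where "F x = - ((b - x) powr \<sigma>) / \<sigma>" for x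
  have "((\<lambda>s. (b - s) powr (\<sigma> - 1)) has_integral (F c' - F c)) {c..c'}"
  proof (rule fundamental_theorem_of_calculus_interior[OF \<open>c \<le> c'\<close>])
    show "continuous_on {c..c'} F"
      unfolding F_def using assms by (intro continuous_intros continuous_on_powr') auto
    fix x assume "x \<in> {c<..<c'}"
    then have "0 < b - x" using assms by auto
    then have "(F has_real_derivative (b - x) powr (\<sigma> - 1)) (at x)"
      unfolding F_def using \<open>0 < \<sigma>\<close> by (auto intro!: derivative_eq_intros)
    then show "(F has_vector_derivative (b - x) powr (\<sigma> - 1)) (at x)"
      by (simp add: has_real_derivative_iff_has_vector_derivative)
  qed
  moreover have "F c' - F c = ((b - c) powr \<sigma> - (b - c') powr \<sigma>) / \<sigma>"
    unfolding F_def using \<open>0 < \<sigma>\<close> by (simp add: field_simps)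
  ultimately show ?thesis by simp
qed

text \<open>Pointwise bounds are only asked for on the open interval: at \<open>s = t\<close> the kernel
  \<open>Em 0\<close> is unconstrained and the junk value \<open>0 powr (\<sigma> - 1) = 0\<close> gives no bound.\<close>

lemma norm_integral_le_integral_interior:
  fixes f :: "real \<Rightarrow> 'a::banach"
  assumes "f integrable_on {a..b}" "g integrable_on {a..b}"
    and "\<And>x. x \<in> {a<..<b} \<Longrightarrow> norm (f x) \<le> g x"
  shows "norm (integral {a..b} f) \<le> integral {a..b} g"
  using assms integral_norm_bound_integral[of f "{a<..<b}" g]
  by (simp add: integral_open_interval_real[of a b] integrable_on_open_interval_real)

lemma norm_integral_le_powr_kernel:
  fixes f :: "real \<Rightarrow> 'a::banach"
  assumes "0 < \<sigma>" "a \<le> t" "f integrable_on {a..t}"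
    and "\<And>s. s \<in> {a<..<t} \<Longrightarrow> norm (f s) \<le> C * (t - s) powr (\<sigma> - 1)"
  shows "norm (integral {a..t} f) \<le> C * (t - a) powr \<sigma> / \<sigma>"
proof -
  have "((\<lambda>s. C * (t - s) powr (\<sigma> - 1)) has_integral C * (t - a) powr \<sigma> / \<sigma>) {a..t}"
    using has_integral_mult_right[OF has_integral_powr_kernel[OF assms(1,2) order_refl], of C]
    by simp
  with assms show ?thesis
    by (metis has_integral_integrable integral_unique norm_integral_le_integral_interior)
qed

lemma tendsto_at_left_of_Cauchy_bound:
  fixes F :: "real \<Rightarrow> 'a::banach"
  assumes "a < b" "(\<omega> \<longlongrightarrow> 0) (at_left b)"
    and "\<And>c c'. a \<le> c \<Longrightarrow> c \<le> c' \<Longrightarrow> c' < b \<Longrightarrow> norm (F c' - F c) \<le> \<omega> c"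
  obtains L where "(F \<longlongrightarrow> L) (at_left b)"
proof -
  have "cauchy_filter (filtermap F (at_left b))"
    unfolding cauchy_filter_metric_filtermap
  proof (intro allI impI)
    fix e :: real assume "0 < e"
    define Q where "Q x \<longleftrightarrow> a < x \<and> x < b \<and> \<omega> x < e" for x
    have "eventually Q (at_left b)"
      using eventually_at_left_real[OF \<open>a < b\<close>] order_tendstoD(2)[OF assms(2) \<open>0 < e\<close>]
      unfolding Q_def by eventually_elim auto
    moreover have "dist (F x) (F y) < e" if "Q x" "Q y" for x y
    proof (cases "x \<le> y")
      case True
      then show ?thesis
        using that assms(3)[of x y] by (simp add: Q_def dist_norm norm_minus_commute)
    next
      case False
      then show ?thesis
        using that assms(3)[of y x] by (simp add: Q_def dist_norm)
    qed
    ultimately show "\<exists>Q. eventually Q (at_left b) \<and> (\<forall>x y. Q x \<and> Q y \<longrightarrow> dist (F x) (F y) < e)"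
      by blast
  qed
  then show ?thesis
    using that unfolding convergent_filter_iff_cauchy[symmetric] convergent_filter_iff filterlim_def
    by blast
qed

lemma has_integral_of_tendsto_at_left:
  fixes f :: "real \<Rightarrow> 'a::banach"
  assumes "a < b" and cont: "continuous_on {a..<b} f"
    and lim: "((\<lambda>c. integral {a..c} f) \<longlongrightarrow> L) (at_left b)"
  shows "(f has_integral L) {a..b}"
proof -
  define G where "G x = (if x < b then integral {a..x} f else L)" for x
  have G_deriv: "(G has_vector_derivative f x) (at x within {a..x'})"
    if "a \<le> x" "x < x'" "x' < b" for x x'
  proof -
    have "((\<lambda>c. integral {a..c} f) has_vector_derivative f x) (at x within {a..x'})"
      using that by (intro integral_has_vector_derivative continuous_on_subset[OF cont]) auto
    then show ?thesis
      by (rule has_vector_derivative_transform_within[where d=1])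
        (use that in \<open>auto simp: G_def dist_real_def\<close>)
  qed
  have "continuous (at x within {a..b}) G" if "x \<in> {a..b}" for x
  proof (cases "x < b")
    case True
    define x' where "x' = (x + b) / 2"
    have "x < x'" "x' < b"
      using True by (auto simp: x'_def)
    have "at x within {a..b} = at x within {a..x'}"
      by (rule at_within_nhd[of _ "{..<x'}"]) (use \<open>x < x'\<close> \<open>x' < b\<close> in auto)
    then show ?thesis
      using has_vector_derivative_continuous[OF G_deriv[OF _ \<open>x < x'\<close> \<open>x' < b\<close>]] that
      by (simp add: continuous_within)
  next
    case False
    then have "x = b"
      using that by auto
    have "(G \<longlongrightarrow> L) (at_left b)"
      using lim by (rule Lim_transform_eventually) (auto simp: G_def eventually_at_left_field intro: lt_ex)
    then show ?thesis
      using \<open>x = b\<close> \<open>a < b\<close> by (simp add: continuous_within at_within_Icc_at_left G_def)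
  qed
  moreover have "(G has_vector_derivative f x) (at x)" if "x \<in> {a<..<b}" for x
  proof -
    define x' where "x' = (x + b) / 2"
    have "x < x'" "x' < b"
      using that by (auto simp: x'_def)
    then show ?thesis
      using G_deriv[of x x'] that at_within_Icc_at[of a x x'] by auto
  qed
  ultimately have "(f has_integral (G b - G a)) {a..b}"
    using \<open>a < b\<close> by (intro fundamental_theorem_of_calculus_interior)
      (auto simp: continuous_on_eq_continuous_within)
  then show ?thesis
    using \<open>a < b\<close> by (simp add: G_def)
qed

lemma integrable_on_Icc_powr_singularity:
  fixes f :: "real \<Rightarrow> 'a::banach"
  assumes "0 < \<sigma>" and cont: "continuous_on {a..<b} f"
    and bound: "\<And>s. s \<in> {a..<b} \<Longrightarrow> norm (f s) \<le> C * (b - s) powr (\<sigma> - 1)"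
  shows "f integrable_on {a..b}"
proof (cases "a < b")
  case False
  then show ?thesis
    by (metis box_real(2) content_real_eq_0 integrable_on_null not_less)
next
  case True
  have "0 \<le> C * (b - a) powr (\<sigma> - 1)"
    using bound[of a] True by (meson atLeastLessThan_iff norm_ge_zero order_refl order_trans)
  then have "0 \<le> C"
    using True by (simp add: zero_le_mult_iff)
  define F where "F c = integral {a..c} f" for c
  have integrable: "f integrable_on {c..c'}" if "a \<le> c" "c' < b" for c c'
    using that by (intro integrable_continuous_real continuous_on_subset[OF cont]) auto
  have increment: "norm (F c' - F c) \<le> C / \<sigma> * (b - c) powr \<sigma>"
    if "a \<le> c" "c \<le> c'" "c' < b" for c c'
  proof -
    have kernel: "((\<lambda>s. C * (b - s) powr (\<sigma> - 1)) has_integral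
        C * (((b - c) powr \<sigma> - (b - c') powr \<sigma>) / \<sigma>)) {c..c'}"
      using that by (intro has_integral_mult_right has_integral_powr_kernel \<open>0 < \<sigma>\<close>) auto
    have "F c' - F c = integral {c..c'} f"
      using Henstock_Kurzweil_Integration.integral_combine[where a=a and c=c and b=c' and f=f]
        integrable[of a c'] that
      by (simp add: F_def algebra_simps)
    also have "norm \<dots> \<le> integral {c..c'} (\<lambda>s. C * (b - s) powr (\<sigma> - 1))"
      using that by (intro norm_integral_le_integral_interior integrable has_integral_integrable[OF kernel]
          bound) auto
    also have "\<dots> = C * (b - c) powr \<sigma> / \<sigma> - C * (b - c') powr \<sigma> / \<sigma>"
      using integral_unique[OF kernel] by (simp add: diff_divide_distrib right_diff_distrib)
    also have "\<dots> \<le> C / \<sigma> * (b - c) powr \<sigma>"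
      using \<open>0 \<le> C\<close> \<open>0 < \<sigma>\<close> by simp
    finally show ?thesis .
  qed
  have "((\<lambda>c. b - c) \<longlongrightarrow> 0) (at_left b)"
    using tendsto_diff[OF tendsto_const tendsto_ident_at, of b b] by simp
  then have "((\<lambda>c. (b - c) powr \<sigma>) \<longlongrightarrow> 0) (at_left b)"
    by (rule tendsto_zero_powrI[OF _ tendsto_const])
      (auto simp: \<open>0 < \<sigma>\<close> eventually_at_filter)
  then have "((\<lambda>c. C / \<sigma> * (b - c) powr \<sigma>) \<longlongrightarrow> 0) (at_left b)"
    using tendsto_mult_left[of _ 0 _ "C / \<sigma>"] by simp
  then obtain L where "(F \<longlongrightarrow> L) (at_left b)"
    using tendsto_at_left_of_Cauchy_bound[OF True, of "\<lambda>c. C / \<sigma> * (b - c) powr \<sigma>" F] increment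
    by blast
  then show ?thesis
    unfolding F_def using has_integral_of_tendsto_at_left[OF True cont] by blast
qed

lemma powr_small_near_zero:
  fixes \<sigma> C e :: real
  assumes "0 < \<sigma>" "0 < e"
  obtains d where "0 < d" "\<And>h. 0 \<le> h \<Longrightarrow> h < d \<Longrightarrow> C * h powr \<sigma> < e"
proof -
  have "((\<lambda>h. h powr \<sigma>) \<longlongrightarrow> 0) (at_right 0)"
    by (rule tendsto_zero_powrI[OF tendsto_ident_at tendsto_const])
      (auto simp: assms eventually_at_filter)
  then have "((\<lambda>h. C * h powr \<sigma>) \<longlongrightarrow> 0) (at_right 0)"
    using tendsto_mult_left[of _ 0 _ C] by simp
  then have "eventually (\<lambda>h. C * h powr \<sigma> < e) (at_right 0)"
    by (rule order_tendstoD) (use assms in simp)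
  then obtain d where d: "0 < d" "\<And>h. 0 < h \<Longrightarrow> h < d \<Longrightarrow> C * h powr \<sigma> < e"
    unfolding eventually_at_right_field by auto
  show ?thesis
  proof (rule that[OF \<open>0 < d\<close>])
    fix h :: real assume "0 \<le> h" "h < d"
    then show "C * h powr \<sigma> < e"
      using d(2)[of h] \<open>0 < e\<close> by (cases "h = 0") auto
  qed
qed

section \<open>Convolution with a weakly singular operator kernel\<close>

locale singular_kernel =
  fixes Em :: "real \<Rightarrow> 'm::banach \<Rightarrow> 'f::banach" and u_m :: "real \<Rightarrow> real" and \<sigma> :: real
  assumes Em_linear: "\<And>t. 0 < t \<Longrightarrow> linear (Em t)"
    and Em_continuous: "continuous_on (UNIV \<times> {0<..}) (\<lambda>(g, t). Em t g)"
    and u_m_continuous: "continuous_on {0<..} u_m"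
    and u_m_pos: "\<And>t. 0 < t \<Longrightarrow> 0 < u_m t"
    and norm_Em_le: "\<And>t g. 0 < t \<Longrightarrow> norm (Em t g) \<le> u_m t * norm g"
    and \<sigma>_pos: "0 < \<sigma>" and \<sigma>_le_1: "\<sigma> \<le> 1"
    and u_m_bigo: "u_m \<in> O[at_right 0](\<lambda>t. t powr (\<sigma> - 1))"
begin

lemma kernel_bound:
  obtains K where "0 < K" "\<And>\<tau>. 0 < \<tau> \<Longrightarrow> \<tau> \<le> H \<Longrightarrow> u_m \<tau> \<le> K * \<tau> powr (\<sigma> - 1)"
proof -
  define H' where "H' = max H 1"
  obtain c where "0 < c" "eventually (\<lambda>x. norm (u_m x) \<le> c * norm (x powr (\<sigma> - 1))) (at_right 0)"
    using landau_o.bigE[OF u_m_bigo] by blast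
  then obtain b where "0 < b"
    and b: "\<And>\<tau>. 0 < \<tau> \<Longrightarrow> \<tau> < b \<Longrightarrow> norm (u_m \<tau>) \<le> c * norm (\<tau> powr (\<sigma> - 1))"
    unfolding eventually_at_right_field by blast
  define e where "e = min b H'"
  have e: "0 < e" "e \<le> H'"
    using \<open>0 < b\<close> by (auto simp: e_def H'_def)
  have near: "u_m \<tau> \<le> c * \<tau> powr (\<sigma> - 1)" if "0 < \<tau>" "\<tau> < e" for \<tau>
    using b[of \<tau>] that by (simp add: e_def)
  obtain B where "0 \<le> B" and far: "\<And>\<tau>. \<tau> \<in> {e..H'} \<Longrightarrow> norm (u_m \<tau>) \<le> B"
    using continuous_on_compact_bound[OF compact_Icc continuous_on_subset[OF u_m_continuous]] e
    by (metis atLeastAtMost_iff greaterThan_iff less_le_trans subsetI)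
  define K where "K = max c (B / H' powr (\<sigma> - 1))"
  have "u_m \<tau> \<le> K * \<tau> powr (\<sigma> - 1)" if "0 < \<tau>" "\<tau> \<le> H" for \<tau>
  proof (cases "\<tau> < e")
    case True
    then show ?thesis
      using near[OF \<open>0 < \<tau>\<close>] by (smt (verit) K_def max.cobounded1 mult_right_mono powr_ge_zero)
  next
    case False
    have "u_m \<tau> \<le> B"
      using far[of \<tau>] False that by (force simp: H'_def dest: abs_le_D1)
    also have "\<dots> = B / H' powr (\<sigma> - 1) * H' powr (\<sigma> - 1)"
      using e by simp
    also have "\<dots> \<le> K * \<tau> powr (\<sigma> - 1)"
      using that \<sigma>_le_1 \<open>0 \<le> B\<close> \<open>0 < c\<close> by (intro mult_mono powr_mono2') (auto simp: K_def H'_def)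
    finally show ?thesis .
  qed
  moreover have "0 < K"
    using \<open>0 < c\<close> by (simp add: K_def)
  ultimately show ?thesis
    using that by blast
qed

lemma continuous_on_Em_comp:
  assumes "continuous_on S g" "continuous_on S h" "\<And>x. x \<in> S \<Longrightarrow> 0 < h x"
  shows "continuous_on S (\<lambda>s. Em (h s) (g s))"
  using continuous_on_compose2[OF Em_continuous, of S "\<lambda>s. (g s, h s)"] assms
  by (auto intro!: continuous_intros)

lemma integrable_on_kernel_bound:
  fixes f :: "real \<Rightarrow> 'a::banach"
  assumes "continuous_on {a..<b} f" "0 \<le> G"
    and "\<And>s. s \<in> {a..<b} \<Longrightarrow> norm (f s) \<le> u_m (b - s) * G"
  shows "f integrable_on {a..b}"
proof -
  obtain K where "0 < K" and K: "\<And>\<tau>. 0 < \<tau> \<Longrightarrow> \<tau> \<le> b - a \<Longrightarrow> u_m \<tau> \<le> K * \<tau> powr (\<sigma> - 1)"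
    using kernel_bound by blast
  show ?thesis
  proof (rule integrable_on_Icc_powr_singularity[OF \<sigma>_pos assms(1)])
    fix s assume "s \<in> {a..<b}"
    then have "norm (f s) \<le> (K * (b - s) powr (\<sigma> - 1)) * G"
      using assms(3)[of s] K[of "b - s"] \<open>0 \<le> G\<close> by (force intro: order_trans mult_right_mono)
    then show "norm (f s) \<le> K * G * (b - s) powr (\<sigma> - 1)"
      by (simp add: algebra_simps)
  qed
qed

lemma integrable_kernel:
  assumes "continuous_on {a..b} g"
  shows "(\<lambda>s. Em (b - s) (g s)) integrable_on {a..b}"
proof -
  obtain G where G: "0 \<le> G" "\<And>s. s \<in> {a..b} \<Longrightarrow> norm (g s) \<le> G"
    using continuous_on_compact_bound[OF compact_Icc assms] by blast
  moreover have "continuous_on {a..<b} (\<lambda>s. Em (b - s) (g s))"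
    using assms by (intro continuous_on_Em_comp continuous_on_subset[OF assms]) (auto intro!: continuous_intros)
  moreover have "norm (Em (b - s) (g s)) \<le> u_m (b - s) * G" if "s \<in> {a..<b}" for s
    using that norm_Em_le[of "b - s" "g s"] u_m_pos[of "b - s"] G(2)[of s]
    by (force intro: order_trans mult_left_mono)
  ultimately show ?thesis
    by (intro integrable_on_kernel_bound[where G=G])
qed

lemma integrable_kernel_real:
  assumes "continuous_on {a..b} h"
  shows "(\<lambda>s. u_m (b - s) * h s) integrable_on {a..b}"
proof -
  obtain G where G: "0 \<le> G" "\<And>s. s \<in> {a..b} \<Longrightarrow> norm (h s) \<le> G"
    using continuous_on_compact_bound[OF compact_Icc assms] by blast
  moreover have "continuous_on {a..<b} (\<lambda>s. u_m (b - s))"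
    by (rule continuous_on_compose2[OF u_m_continuous]) (auto intro!: continuous_intros)
  then have "continuous_on {a..<b} (\<lambda>s. u_m (b - s) * h s)"
    by (intro continuous_on_mult continuous_on_subset[OF assms]) auto
  moreover have "norm (u_m (b - s) * h s) \<le> u_m (b - s) * G" if "s \<in> {a..<b}" for s
    using that u_m_pos[of "b - s"] G(2)[of s] by (simp add: abs_mult mult_left_mono)
  ultimately show ?thesis
    by (intro integrable_on_kernel_bound[where G=G])
qed

lemma norm_integral_le_kernel_bound:
  fixes f :: "real \<Rightarrow> 'a::banach"
  assumes "a \<le> t" "f integrable_on {a..t}" "0 \<le> G"
    and K: "\<And>\<tau>. 0 < \<tau> \<Longrightarrow> \<tau> \<le> t - a \<Longrightarrow> u_m \<tau> \<le> K * \<tau> powr (\<sigma> - 1)"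
    and bound: "\<And>s. s \<in> {a<..<t} \<Longrightarrow> norm (f s) \<le> u_m (t - s) * G"
  shows "norm (integral {a..t} f) \<le> K * G * (t - a) powr \<sigma> / \<sigma>"
proof (rule norm_integral_le_powr_kernel[OF \<sigma>_pos assms(1,2)])
  fix s assume "s \<in> {a<..<t}"
  then have "norm (f s) \<le> (K * (t - s) powr (\<sigma> - 1)) * G"
    using bound[of s] K[of "t - s"] \<open>0 \<le> G\<close> by (force intro: order_trans mult_right_mono)
  then show "norm (f s) \<le> K * G * (t - s) powr (\<sigma> - 1)"
    by (simp add: algebra_simps)
qed

lemma norm_integral_kernel_diff_le:
  assumes "continuous_on {a..t} g1" "continuous_on {a..t} g2" "continuous_on {a..t} h"
    and "\<And>s. s \<in> {a<..<t} \<Longrightarrow> norm (g1 s - g2 s) \<le> h s"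
  shows "norm (integral {a..t} (\<lambda>s. Em (t - s) (g1 s)) - integral {a..t} (\<lambda>s. Em (t - s) (g2 s)))
    \<le> integral {a..t} (\<lambda>s. u_m (t - s) * h s)"
proof -
  have "norm (integral {a..t} (\<lambda>s. Em (t - s) (g1 s) - Em (t - s) (g2 s)))
      \<le> integral {a..t} (\<lambda>s. u_m (t - s) * h s)"
  proof (rule norm_integral_le_integral_interior)
    fix s assume s: "s \<in> {a<..<t}"
    then have "Em (t - s) (g1 s) - Em (t - s) (g2 s) = Em (t - s) (g1 s - g2 s)"
      using Em_linear[of "t - s"] by (simp add: linear_diff)
    also have "norm \<dots> \<le> u_m (t - s) * h s"
      using s norm_Em_le[of "t - s"] u_m_pos[of "t - s"] assms(4)[OF s]
      by (force intro: order_trans mult_left_mono)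
    finally show "norm (Em (t - s) (g1 s) - Em (t - s) (g2 s)) \<le> u_m (t - s) * h s" .
  next
    show "(\<lambda>s. Em (t - s) (g1 s) - Em (t - s) (g2 s)) integrable_on {a..t}"
      using assms by (intro integrable_diff integrable_kernel)
    show "(\<lambda>s. u_m (t - s) * h s) integrable_on {a..t}"
      using assms by (intro integrable_kernel_real)
  qed
  then show ?thesis
    using assms by (simp only: integral_diff integrable_kernel)
qed

lemma kernel_integral_increment_le:
  fixes g :: "real \<Rightarrow> 'm"
  assumes cont: "continuous_on {a..b} g" and "0 \<le> G" and G: "\<And>s. s \<in> {a..b} \<Longrightarrow> norm (g s) \<le> G"
    and "0 < K" and K: "\<And>\<tau>. 0 < \<tau> \<Longrightarrow> \<tau> \<le> b - a \<Longrightarrow> u_m \<tau> \<le> K * \<tau> powr (\<sigma> - 1)"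
    and t: "a \<le> t'" "t' \<le> t" "t \<le> b"
    and osc: "\<And>s. s \<in> {a..t'} \<Longrightarrow> norm (g (s + (t - t')) - g s) \<le> \<omega>"
  shows "norm (integral {a..t} (\<lambda>s. Em (t - s) (g s)) - integral {a..t'} (\<lambda>s. Em (t' - s) (g s)))
    \<le> K * G / \<sigma> * (t - t') powr \<sigma> + K * (b - a) powr \<sigma> / \<sigma> * \<omega>"
proof -
  text \<open>Split \<open>[a, t]\<close> at \<open>a + (t - t')\<close>; shifted by \<open>t - t'\<close>, the right piece becomes an
    integral over \<open>[a, t']\<close> against the same kernel as the one for \<open>t'\<close>.\<close>
  define h where "h = t - t'"
  have "0 \<le> \<omega>"
    using osc[of a] t by (auto intro: order_trans[OF norm_ge_zero])
  have int_t: "(\<lambda>s. Em (t - s) (g s)) integrable_on {a..t}"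
    using t by (intro integrable_kernel continuous_on_subset[OF cont]) auto
  have shifted_cont: "continuous_on {a..t'} (\<lambda>s. g (s + h))"
    using t by (intro continuous_on_compose2[OF cont] continuous_intros) (auto simp: h_def)
  have "integral {a..t} (\<lambda>s. Em (t - s) (g s))
      = integral {a..a + h} (\<lambda>s. Em (t - s) (g s)) + integral {a + h..t} (\<lambda>s. Em (t - s) (g s))"
    using Henstock_Kurzweil_Integration.integral_combine[OF _ _ int_t, of "a + h"] t
    by (simp add: h_def)
  also have "integral {a + h..t} (\<lambda>s. Em (t - s) (g s)) = integral {a..t'} (\<lambda>s. Em (t' - s) (g (s + h)))"
    using integral_shift_real_ivl[where f="\<lambda>s. Em (t - s) (g s)" and a="a + h" and b=t and c=h]
    by (simp add: h_def algebra_simps)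
  finally have split: "integral {a..t} (\<lambda>s. Em (t - s) (g s)) - integral {a..t'} (\<lambda>s. Em (t' - s) (g s))
      = integral {a..a + h} (\<lambda>s. Em (t - s) (g s))
        + (integral {a..t'} (\<lambda>s. Em (t' - s) (g (s + h))) - integral {a..t'} (\<lambda>s. Em (t' - s) (g s)))"
    by simp
  have near: "norm (integral {a..a + h} (\<lambda>s. Em (t - s) (g s))) \<le> K * G * (a + h - a) powr \<sigma> / \<sigma>"
  proof (rule norm_integral_le_powr_kernel[OF \<sigma>_pos])
    show "(\<lambda>s. Em (t - s) (g s)) integrable_on {a..a + h}"
      using t by (intro integrable_on_subinterval[OF int_t]) (auto simp: h_def)
    fix s assume s: "s \<in> {a<..<a + h}"
    have "norm (Em (t - s) (g s)) \<le> u_m (t - s) * G"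
      using s t norm_Em_le[of "t - s" "g s"] G[of s] u_m_pos[of "t - s"]
      by (force simp: h_def intro: order_trans mult_left_mono)
    also have "\<dots> \<le> (K * (t - s) powr (\<sigma> - 1)) * G"
      using s t K[of "t - s"] \<open>0 \<le> G\<close> by (intro mult_right_mono) (auto simp: h_def)
    also have "\<dots> \<le> (K * (a + h - s) powr (\<sigma> - 1)) * G"
      using s t \<sigma>_le_1 \<open>0 < K\<close> \<open>0 \<le> G\<close>
      by (intro mult_right_mono mult_left_mono powr_mono2') (auto simp: h_def)
    finally show "norm (Em (t - s) (g s)) \<le> K * G * (a + h - s) powr (\<sigma> - 1)"
      by (simp add: algebra_simps)
  qed (use t in \<open>auto simp: h_def\<close>)
  have far: "norm (integral {a..t'} (\<lambda>s. Em (t' - s) (g (s + h))) - integral {a..t'} (\<lambda>s. Em (t' - s) (g s)))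
      \<le> K * \<omega> * (t' - a) powr \<sigma> / \<sigma>"
  proof -
    have "norm (integral {a..t'} (\<lambda>s. Em (t' - s) (g (s + h)) - Em (t' - s) (g s)))
        \<le> K * \<omega> * (t' - a) powr \<sigma> / \<sigma>"
    proof (rule norm_integral_le_kernel_bound[OF t(1) _ \<open>0 \<le> \<omega>\<close>])
      show "(\<lambda>s. Em (t' - s) (g (s + h)) - Em (t' - s) (g s)) integrable_on {a..t'}"
        using t by (intro integrable_diff integrable_kernel shifted_cont continuous_on_subset[OF cont]) auto
      show "u_m \<tau> \<le> K * \<tau> powr (\<sigma> - 1)" if "0 < \<tau>" "\<tau> \<le> t' - a" for \<tau>
        using that t by (intro K) auto
      fix s assume s: "s \<in> {a<..<t'}"
      then have "Em (t' - s) (g (s + h)) - Em (t' - s) (g s) = Em (t' - s) (g (s + h) - g s)"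
        using Em_linear[of "t' - s"] by (simp add: linear_diff)
      also have "norm \<dots> \<le> u_m (t' - s) * \<omega>"
        using s norm_Em_le[of "t' - s"] osc[of s] u_m_pos[of "t' - s"]
        by (force simp: h_def intro: order_trans mult_left_mono)
      finally show "norm (Em (t' - s) (g (s + h)) - Em (t' - s) (g s)) \<le> u_m (t' - s) * \<omega>" .
    qed
    then show ?thesis
      using t by (simp add: integral_diff integrable_kernel shifted_cont continuous_on_subset[OF cont])
  qed
  have "(t' - a) powr \<sigma> \<le> (b - a) powr \<sigma>"
    using t \<sigma>_pos by (intro powr_mono2) auto
  then have "K * \<omega> * (t' - a) powr \<sigma> / \<sigma> \<le> K * (b - a) powr \<sigma> / \<sigma> * \<omega>"
    using \<open>0 < K\<close> \<open>0 \<le> \<omega>\<close> \<sigma>_pos by (simp add: divide_right_mono mult_left_mono mult.commute mult.left_commute)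
  then show ?thesis
    using split near far norm_triangle_le[OF add_mono[OF near far]]
    by (simp add: h_def algebra_simps)
qed

lemma continuous_on_kernel_integral:
  fixes g :: "real \<Rightarrow> 'm"
  assumes cont: "continuous_on {a..b} g"
  shows "continuous_on {a..b} (\<lambda>t. integral {a..t} (\<lambda>s. Em (t - s) (g s)))"
proof -
  define J where "J t = integral {a..t} (\<lambda>s. Em (t - s) (g s))" for t
  obtain G where G: "0 \<le> G" "\<And>s. s \<in> {a..b} \<Longrightarrow> norm (g s) \<le> G"
    using continuous_on_compact_bound[OF compact_Icc cont] by blast
  obtain K where K: "0 < K" "\<And>\<tau>. 0 < \<tau> \<Longrightarrow> \<tau> \<le> b - a \<Longrightarrow> u_m \<tau> \<le> K * \<tau> powr (\<sigma> - 1)"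
    using kernel_bound by blast
  define C where "C = K * (b - a) powr \<sigma> / \<sigma>"
  have "0 \<le> C"
    using K(1) \<sigma>_pos by (simp add: C_def)
  have "uniformly_continuous_on {a..b} J"
    unfolding uniformly_continuous_on_def
  proof (intro allI impI)
    fix e :: real assume "0 < e"
    define \<omega> where "\<omega> = e / (2 * (C + 1))"
    have "0 < \<omega>"
      using \<open>0 < e\<close> \<open>0 \<le> C\<close> by (simp add: \<omega>_def)
    have "C * \<omega> < (C + 1) * \<omega>"
      using \<open>0 < \<omega>\<close> by simp
    also have "\<dots> = e / 2"
      using \<open>0 \<le> C\<close> by (simp add: \<omega>_def field_simps)
    finally have C\<omega>: "C * \<omega> < e / 2" .
    obtain d1 where "0 < d1"
      and d1: "\<And>x x'. x \<in> {a..b} \<Longrightarrow> x' \<in> {a..b} \<Longrightarrow> dist x' x < d1 \<Longrightarrow> dist (g x') (g x) < \<omega>"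
      using compact_uniformly_continuous[OF cont compact_Icc] \<open>0 < \<omega>\<close>
      unfolding uniformly_continuous_on_def by metis
    obtain d2 where "0 < d2" and d2: "\<And>h. 0 \<le> h \<Longrightarrow> h < d2 \<Longrightarrow> K * G / \<sigma> * h powr \<sigma> < e / 2"
      using powr_small_near_zero[OF \<sigma>_pos, of "e / 2" "K * G / \<sigma>"] \<open>0 < e\<close> by auto
    have close: "dist (J t) (J t') < e"
      if t: "t' \<in> {a..b}" "t \<in> {a..b}" "t' \<le> t" "t - t' < min d1 d2" for t t'
    proof -
      have "norm (J t - J t') \<le> K * G / \<sigma> * (t - t') powr \<sigma> + C * \<omega>"
        unfolding J_def C_def
      proof (rule kernel_integral_increment_le[OF cont G K])
        fix s assume "s \<in> {a..t'}"
        then show "norm (g (s + (t - t')) - g s) \<le> \<omega>"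
          using d1[of s "s + (t - t')"] t by (auto simp: dist_norm)
      qed (use t in auto)
      also have "\<dots> < e / 2 + e / 2"
      proof (rule add_strict_mono[OF _ C\<omega>])
        show "K * G / \<sigma> * (t - t') powr \<sigma> < e / 2"
          using d2[of "t - t'"] t by auto
      qed
      finally show ?thesis
        by (simp add: dist_norm)
    qed
    show "\<exists>d>0. \<forall>x\<in>{a..b}. \<forall>x'\<in>{a..b}. dist x' x < d \<longrightarrow> dist (J x') (J x) < e"
    proof (intro exI[of _ "min d1 d2"] conjI ballI impI)
      fix x x' assume "x \<in> {a..b}" "x' \<in> {a..b}" "dist x' x < min d1 d2"
      then show "dist (J x') (J x) < e"
        using close[of x x'] close[of x' x]
        by (cases "x \<le> x'") (auto simp: dist_real_def dist_commute)
    qed (use \<open>0 < d1\<close> \<open>0 < d2\<close> in auto)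
  qed
  then show ?thesis
    unfolding J_def by (rule uniformly_continuous_imp_continuous)
qed

lemma exp_damped_kernel_integral_le:
  assumes "a \<le> t" "0 < \<delta>" "0 \<le> \<mu>" "0 < K"
    and K: "\<And>\<tau>. 0 < \<tau> \<Longrightarrow> \<tau> \<le> t - a \<Longrightarrow> u_m \<tau> \<le> K * \<tau> powr (\<sigma> - 1)"
  shows "integral {a..t} (\<lambda>s. u_m (t - s) * exp (- \<mu> * (t - s)))
    \<le> (t - a) * (K * \<delta> powr (\<sigma> - 1) * exp (- \<mu> * \<delta>)) + K * \<delta> powr \<sigma> / \<sigma>"
proof -
  define f where "f s = u_m (t - s) * exp (- \<mu> * (t - s))" for s
  define m where "m = max a (t - \<delta>)"
  have "a \<le> m" "m \<le> t" "t - m \<le> \<delta>"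
    using \<open>a \<le> t\<close> \<open>0 < \<delta>\<close> by (auto simp: m_def)
  have f_int: "f integrable_on {a..t}"
    unfolding f_def by (intro integrable_kernel_real continuous_intros)
  have "integral {a..m} f \<le> norm (integral {a..m} f)"
    by simp
  also have "\<dots> \<le> integral {a..m} (\<lambda>s. K * \<delta> powr (\<sigma> - 1) * exp (- \<mu> * \<delta>))"
  proof (rule norm_integral_le_integral_interior)
    show "f integrable_on {a..m}"
      using \<open>a \<le> m\<close> \<open>m \<le> t\<close> by (intro integrable_on_subinterval[OF f_int]) auto
    fix s assume s: "s \<in> {a<..<m}"
    then have "\<delta> < t - s"
      by (auto simp: m_def)
    have "norm (f s) = u_m (t - s) * exp (- \<mu> * (t - s))"
      using u_m_pos[of "t - s"] \<open>0 < \<delta>\<close> \<open>\<delta> < t - s\<close> by (simp add: f_def)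
    also have "\<dots> \<le> (K * (t - s) powr (\<sigma> - 1)) * exp (- \<mu> * \<delta>)"
      using K[of "t - s"] s \<open>\<delta> < t - s\<close> \<open>0 \<le> \<mu>\<close> \<open>0 < \<delta>\<close> \<open>m \<le> t\<close> \<open>0 < K\<close>
      by (intro mult_mono) (auto simp: m_def intro: mult_left_mono)
    also have "\<dots> \<le> K * \<delta> powr (\<sigma> - 1) * exp (- \<mu> * \<delta>)"
      using \<sigma>_le_1 \<open>0 < K\<close> \<open>0 < \<delta>\<close> \<open>\<delta> < t - s\<close>
      by (intro mult_right_mono mult_left_mono powr_mono2') auto
    finally show "norm (f s) \<le> K * \<delta> powr (\<sigma> - 1) * exp (- \<mu> * \<delta>)" .
  qed (rule integrable_const_ivl)
  also have "\<dots> = (m - a) * (K * \<delta> powr (\<sigma> - 1) * exp (- \<mu> * \<delta>))"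
    by (simp only: integral_const_real content_real[OF \<open>a \<le> m\<close>] scaleR_conv_of_real of_real_eq_id id_def)
  also have "\<dots> \<le> (t - a) * (K * \<delta> powr (\<sigma> - 1) * exp (- \<mu> * \<delta>))"
    using \<open>m \<le> t\<close> \<open>0 < K\<close> by (intro mult_right_mono) auto
  finally have far: "integral {a..m} f \<le> (t - a) * (K * \<delta> powr (\<sigma> - 1) * exp (- \<mu> * \<delta>))" .
  have "integral {m..t} f \<le> norm (integral {m..t} f)"
    by simp
  also have "\<dots> \<le> K * 1 * (t - m) powr \<sigma> / \<sigma>"
  proof (rule norm_integral_le_kernel_bound[OF \<open>m \<le> t\<close> _ zero_le_one])
    show "f integrable_on {m..t}"
      using \<open>a \<le> m\<close> by (intro integrable_on_subinterval[OF f_int]) auto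
    show "u_m \<tau> \<le> K * \<tau> powr (\<sigma> - 1)" if "0 < \<tau>" "\<tau> \<le> t - m" for \<tau>
      using that \<open>a \<le> m\<close> by (intro K) auto
    fix s assume "s \<in> {m<..<t}"
    then show "norm (f s) \<le> u_m (t - s) * 1"
      using u_m_pos[of "t - s"] \<open>0 \<le> \<mu>\<close> by (simp add: f_def abs_mult)
  qed
  also have "\<dots> \<le> K * \<delta> powr \<sigma> / \<sigma>"
    using \<open>t - m \<le> \<delta>\<close> \<open>m \<le> t\<close> \<sigma>_pos \<open>0 < K\<close>
    by (simp add: divide_right_mono mult_left_mono powr_mono2)
  finally have near: "integral {m..t} f \<le> K * \<delta> powr \<sigma> / \<sigma>" .
  have "integral {a..t} f = integral {a..m} f + integral {m..t} f"
    using Henstock_Kurzweil_Integration.integral_combine[OF \<open>a \<le> m\<close> \<open>m \<le> t\<close> f_int] by simp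
  then show ?thesis
    using far near unfolding f_def[abs_def] by linarith
qed

lemma exp_weighted_kernel_integral_le:
  assumes "0 \<le> H" "0 < L"
  obtains \<mu> where "0 < \<mu>"
    "\<And>a t. a \<le> t \<Longrightarrow> t - a \<le> H \<Longrightarrow>
      L * integral {a..t} (\<lambda>s. u_m (t - s) * exp (- \<mu> * (t - s))) \<le> 1 / 2"
proof -
  obtain K where K: "0 < K" "\<And>\<tau>. 0 < \<tau> \<Longrightarrow> \<tau> \<le> H \<Longrightarrow> u_m \<tau> \<le> K * \<tau> powr (\<sigma> - 1)"
    using kernel_bound by blast
  text \<open>The width \<open>\<delta>\<close> of the singular part near \<open>s = t\<close> is fixed first; \<open>\<mu>\<close> then damps the rest.\<close>
  define \<delta> where "\<delta> = (\<sigma> / (4 * L * K)) powr (1 / \<sigma>)"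
  have "0 < \<delta>"
    using \<sigma>_pos assms K(1) by (simp add: \<delta>_def)
  have near_small: "L * (K * \<delta> powr \<sigma> / \<sigma>) = 1 / 4"
    using \<sigma>_pos assms K(1) by (simp add: \<delta>_def powr_powr)
  define C where "C = K * \<delta> powr (\<sigma> - 1)"
  have "0 < C"
    using K(1) \<open>0 < \<delta>\<close> by (simp add: C_def)
  define \<mu> where "\<mu> = 4 * L * C * (H + 1) / \<delta>"
  have "0 < \<mu>"
    using assms \<open>0 < C\<close> \<open>0 < \<delta>\<close> by (simp add: \<mu>_def)
  have "\<mu> * \<delta> < exp (\<mu> * \<delta>)"
    using exp_ge_add_one_self[of "\<mu> * \<delta>"] by linarith
  then have "exp (- \<mu> * \<delta>) \<le> 1 / (\<mu> * \<delta>)"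
    using \<open>0 < \<mu>\<close> \<open>0 < \<delta>\<close> by (simp add: exp_minus field_simps less_imp_le)
  also have "\<dots> = 1 / (4 * (L * (H + 1) * C))"
    using \<open>0 < \<delta>\<close> by (simp add: \<mu>_def)
  finally have "L * (H + 1) * C * exp (- \<mu> * \<delta>) \<le> L * (H + 1) * C * (1 / (4 * (L * (H + 1) * C)))"
    using assms \<open>0 < C\<close> by (intro mult_left_mono) auto
  then have far_small: "L * ((H + 1) * (C * exp (- \<mu> * \<delta>))) \<le> 1 / 4"
    using assms \<open>0 < C\<close> by (simp add: mult.assoc)
  show ?thesis
  proof (rule that[OF \<open>0 < \<mu>\<close>])
    fix a t assume "a \<le> t" "t - a \<le> H"
    have "L * integral {a..t} (\<lambda>s. u_m (t - s) * exp (- \<mu> * (t - s)))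
        \<le> L * ((t - a) * (C * exp (- \<mu> * \<delta>)) + K * \<delta> powr \<sigma> / \<sigma>)"
      using exp_damped_kernel_integral_le[OF \<open>a \<le> t\<close> \<open>0 < \<delta>\<close> _ K(1)] K(2) \<open>t - a \<le> H\<close> \<open>0 < \<mu>\<close> \<open>0 < L\<close>
      by (intro mult_left_mono) (auto simp: C_def mult.assoc)
    also have "\<dots> \<le> L * ((H + 1) * (C * exp (- \<mu> * \<delta>))) + L * (K * \<delta> powr \<sigma> / \<sigma>)"
      using \<open>t - a \<le> H\<close> \<open>0 < C\<close> \<open>0 < L\<close>
      by (simp add: distrib_left mult_left_mono mult_right_mono)
    also have "\<dots> \<le> 1 / 2"
      using far_small near_small by linarith
    finally show "L * integral {a..t} (\<lambda>s. u_m (t - s) * exp (- \<mu> * (t - s))) \<le> 1 / 2" .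
  qed
qed

end

section \<open>Picard iteration on a compact time interval\<close>

lemma uniform_limit_of_summable_increments:
  fixes x :: "nat \<Rightarrow> 'a \<Rightarrow> 'b::banach"
  assumes "\<And>n s. s \<in> S \<Longrightarrow> norm (x (Suc n) s - x n s) \<le> M n" "summable M"
  obtains y where "uniform_limit S x y sequentially"
proof -
  have "uniform_limit S (\<lambda>n s. x 0 s + (\<Sum>i<n. x (Suc i) s - x i s))
      (\<lambda>s. x 0 s + (\<Sum>i. x (Suc i) s - x i s)) sequentially"
    by (intro uniform_limit_intros Weierstrass_m_test[where M=M]) (use assms in auto)
  moreover have "x 0 s + (\<Sum>i<n. x (Suc i) s - x i s) = x n s" for n s
    using sum_lessThan_telescope[of "\<lambda>i. x i s" n] by simp
  ultimately show ?thesis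
    using that by simp
qed

lemma le_mult_exp:
  fixes a x :: real
  assumes "0 \<le> a" "0 \<le> x"
  shows "a \<le> a * exp x"
  using assms mult_left_mono[of 1 "exp x" a] by simp

text \<open>A compact horizon \<open>c\<close> below \<open>T\<close>, with \<open>ell\<close> standing for \<open>\<ell>(R, \<cdot>)\<close>.\<close>

locale picard_setting = singular_kernel Em u_m \<sigma>
  for Em :: "real \<Rightarrow> 'm::banach \<Rightarrow> 'f::banach" and u_m \<sigma> +
  fixes SF :: "real \<Rightarrow> 'f \<Rightarrow> 'f" and P :: "'f \<Rightarrow> real \<Rightarrow> 'm" and f0 :: 'f
    and t0 c R L :: real and ell :: "real \<Rightarrow> real"
  assumes t0_le_c: "t0 \<le> c" and R_nonneg: "0 \<le> R" and L_pos: "0 < L"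
    and SF_continuous: "continuous_on {t0..c} (\<lambda>t. SF (t - t0) f0)"
    and P_Lipschitz: "\<And>f f' t t'. norm (f - f0) \<le> R \<Longrightarrow> norm (f' - f0) \<le> R \<Longrightarrow>
      t \<in> {t0..c} \<Longrightarrow> t' \<in> {t0..c} \<Longrightarrow> norm (P f t - P f' t') \<le> L * norm (f - f') + L * \<bar>t - t'\<bar>"
    and ell_continuous: "continuous_on {t0..c} ell"
    and P_dev_le_ell: "\<And>f t. norm (f - f0) \<le> R \<Longrightarrow> t \<in> {t0..c} \<Longrightarrow> norm (P f t - P f0 t) \<le> ell t"
    and radius_budget: "\<And>t. t \<in> {t0..c} \<Longrightarrow>
      norm (f0 - SF (t - t0) f0 - integral {t0..t} (\<lambda>s. Em (t - s) (P f0 s)))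
        + integral {t0..t} (\<lambda>s. u_m (t - s) * ell s) \<le> R"
begin

definition Phi :: "(real \<Rightarrow> 'f) \<Rightarrow> real \<Rightarrow> 'f" where
  "Phi \<phi> t = SF (t - t0) f0 + integral {t0..t} (\<lambda>s. Em (t - s) (P (\<phi> s) s))"

definition admissible :: "(real \<Rightarrow> 'f) \<Rightarrow> bool" where
  "admissible \<phi> \<longleftrightarrow> continuous_on {t0..c} \<phi> \<and> (\<forall>t\<in>{t0..c}. norm (\<phi> t - f0) \<le> R)"

lemma admissible_const: "admissible (\<lambda>_. f0)"
  using R_nonneg by (simp add: admissible_def)

lemma continuous_on_P_comp:
  assumes "admissible \<phi>"
  shows "continuous_on {t0..c} (\<lambda>s. P (\<phi> s) s)"
  unfolding continuous_on_eq_continuous_within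
proof
  fix x assume x: "x \<in> {t0..c}"
  have "((\<lambda>y. \<phi> y - \<phi> x) \<longlongrightarrow> 0) (at x within {t0..c})"
    using assms x by (simp add: admissible_def continuous_on_eq_continuous_within continuous_within LIM_zero)
  then have "((\<lambda>y. L * norm (\<phi> y - \<phi> x) + L * \<bar>y - x\<bar>) \<longlongrightarrow> L * norm (0::'f) + L * \<bar>x - x\<bar>)
      (at x within {t0..c})"
    by (intro tendsto_intros)
  then have "((\<lambda>y. L * norm (\<phi> y - \<phi> x) + L * \<bar>y - x\<bar>) \<longlongrightarrow> 0) (at x within {t0..c})"
    by simp
  moreover have "eventually (\<lambda>y. norm (P (\<phi> y) y - P (\<phi> x) x) \<le> L * norm (\<phi> y - \<phi> x) + L * \<bar>y - x\<bar>)
      (at x within {t0..c})"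
    unfolding eventually_at_filter
    by (rule always_eventually) (use assms x in \<open>auto simp: admissible_def intro!: P_Lipschitz\<close>)
  ultimately have "((\<lambda>y. P (\<phi> y) y - P (\<phi> x) x) \<longlongrightarrow> 0) (at x within {t0..c})"
    by (rule Lim_null_comparison[rotated])
  then show "continuous (at x within {t0..c}) (\<lambda>s. P (\<phi> s) s)"
    unfolding continuous_within by (rule LIM_zero_cancel)
qed

lemma continuous_on_Phi:
  assumes "admissible \<phi>"
  shows "continuous_on {t0..c} (Phi \<phi>)"
  unfolding Phi_def
  by (intro continuous_intros SF_continuous continuous_on_kernel_integral continuous_on_P_comp assms)

lemma norm_Phi_minus_f0_le:
  assumes "admissible \<phi>" "t \<in> {t0..c}"
  shows "norm (Phi \<phi> t - f0) \<le> R"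
proof -
  define I where "I \<psi> = integral {t0..t} (\<lambda>s. Em (t - s) (P (\<psi> s) s))" for \<psi>
  define defect where "defect = f0 - SF (t - t0) f0 - I (\<lambda>_. f0)"
  have cont: "continuous_on {t0..t} (\<lambda>s. P (\<psi> s) s)" if "admissible \<psi>" for \<psi>
    by (rule continuous_on_subset[OF continuous_on_P_comp[OF that]]) (use assms(2) in auto)
  have "norm (I \<phi> - I (\<lambda>_. f0)) \<le> integral {t0..t} (\<lambda>s. u_m (t - s) * ell s)"
    unfolding I_def
  proof (rule norm_integral_kernel_diff_le)
    show "continuous_on {t0..t} ell"
      by (rule continuous_on_subset[OF ell_continuous]) (use assms(2) in auto)
    show "norm (P (\<phi> s) s - P f0 s) \<le> ell s" if "s \<in> {t0<..<t}" for s
      using that assms by (intro P_dev_le_ell) (auto simp: admissible_def)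
  qed (use cont[OF assms(1)] cont[OF admissible_const] in simp_all)
  moreover have "norm defect + integral {t0..t} (\<lambda>s. u_m (t - s) * ell s) \<le> R"
    using radius_budget[OF assms(2)] by (simp add: defect_def I_def)
  moreover have "Phi \<phi> t - f0 = (I \<phi> - I (\<lambda>_. f0)) - defect"
    by (simp add: Phi_def I_def defect_def)
  ultimately show ?thesis
    using norm_triangle_ineq4[of "I \<phi> - I (\<lambda>_. f0)" defect] by simp
qed

lemma admissible_Phi: "admissible \<phi> \<Longrightarrow> admissible (Phi \<phi>)"
  using continuous_on_Phi norm_Phi_minus_f0_le by (simp add: admissible_def)

lemma admissible_Phi_iterate: "admissible \<phi> \<Longrightarrow> admissible ((Phi ^^ n) \<phi>)"
  by (induction n) (auto intro: admissible_Phi)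

lemma Phi_cong:
  assumes "\<And>s. s \<in> {t0..c} \<Longrightarrow> \<phi> s = \<psi> s" "t \<in> {t0..c}"
  shows "Phi \<phi> t = Phi \<psi> t"
  unfolding Phi_def using assms by (intro arg_cong2[where f="(+)"] integral_cong refl) auto

lemma Phi_contraction:
  assumes weight: "\<And>t. t \<in> {t0..c} \<Longrightarrow> L * integral {t0..t} (\<lambda>s. u_m (t - s) * exp (- \<mu> * (t - s))) \<le> 1 / 2"
    and "admissible \<phi>" "admissible \<psi>" "0 \<le> D"
    and dist: "\<And>s. s \<in> {t0..c} \<Longrightarrow> norm (\<phi> s - \<psi> s) \<le> D * exp (\<mu> * (s - t0))"
    and t: "t \<in> {t0..c}"
  shows "norm (Phi \<phi> t - Phi \<psi> t) \<le> D / 2 * exp (\<mu> * (t - t0))"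
proof -
  have cont: "continuous_on {t0..t} (\<lambda>s. P (\<xi> s) s)" if "admissible \<xi>" for \<xi>
    by (rule continuous_on_subset[OF continuous_on_P_comp[OF that]]) (use t in auto)
  have "norm (Phi \<phi> t - Phi \<psi> t)
      \<le> integral {t0..t} (\<lambda>s. u_m (t - s) * (L * D * exp (\<mu> * (s - t0))))"
    unfolding Phi_def add_diff_add diff_self add_0
  proof (rule norm_integral_kernel_diff_le)
    fix s assume s: "s \<in> {t0<..<t}"
    then have "norm (P (\<phi> s) s - P (\<psi> s) s) \<le> L * norm (\<phi> s - \<psi> s) + L * \<bar>s - s\<bar>"
      using t \<open>admissible \<phi>\<close> \<open>admissible \<psi>\<close> by (intro P_Lipschitz) (auto simp: admissible_def)
    also have "\<dots> \<le> L * D * exp (\<mu> * (s - t0))"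
      using dist[of s] s t L_pos by (simp add: mult.assoc)
    finally show "norm (P (\<phi> s) s - P (\<psi> s) s) \<le> L * D * exp (\<mu> * (s - t0))" .
  qed (use cont[OF \<open>admissible \<phi>\<close>] cont[OF \<open>admissible \<psi>\<close>] in \<open>auto intro!: continuous_intros\<close>)
  also have "\<dots> = D * exp (\<mu> * (t - t0)) * (L * integral {t0..t} (\<lambda>s. u_m (t - s) * exp (- \<mu> * (t - s))))"
  proof -
    have "(\<lambda>s. u_m (t - s) * (L * D * exp (\<mu> * (s - t0))))
        = (\<lambda>s. D * exp (\<mu> * (t - t0)) * L * (u_m (t - s) * exp (- \<mu> * (t - s))))"
      by (rule ext) (simp add: algebra_simps flip: exp_add)
    then show ?thesis
      by (simp only: integral_mult_right mult.assoc)
  qed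
  also have "\<dots> \<le> D * exp (\<mu> * (t - t0)) * (1 / 2)"
    using weight[OF t] \<open>0 \<le> D\<close> by (intro mult_left_mono) auto
  finally show ?thesis
    by simp
qed

lemma Phi_iterate_dist:
  assumes weight: "\<And>t. t \<in> {t0..c} \<Longrightarrow> L * integral {t0..t} (\<lambda>s. u_m (t - s) * exp (- \<mu> * (t - s))) \<le> 1 / 2"
    and "0 \<le> \<mu>" "admissible \<phi>" "admissible \<psi>"
  shows "\<forall>s\<in>{t0..c}. norm ((Phi ^^ n) \<phi> s - (Phi ^^ n) \<psi> s) \<le> 2 * R / 2 ^ n * exp (\<mu> * (s - t0))"
proof (induction n)
  case 0
  show ?case
  proof
    fix s assume s: "s \<in> {t0..c}"
    have "norm (\<phi> s - \<psi> s) \<le> norm (\<phi> s - f0) + norm (\<psi> s - f0)"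
      using norm_triangle_ineq4[of "\<phi> s - f0" "\<psi> s - f0"] by simp
    also have "\<dots> \<le> 2 * R"
      using s \<open>admissible \<phi>\<close> \<open>admissible \<psi>\<close> unfolding admissible_def by (smt (verit))
    also have "\<dots> \<le> 2 * R * exp (\<mu> * (s - t0))"
      using s \<open>0 \<le> \<mu>\<close> R_nonneg by (intro le_mult_exp) auto
    finally show "norm ((Phi ^^ 0) \<phi> s - (Phi ^^ 0) \<psi> s) \<le> 2 * R / 2 ^ 0 * exp (\<mu> * (s - t0))"
      by simp
  qed
next
  case (Suc n)
  show ?case
  proof
    fix s assume s: "s \<in> {t0..c}"
    have "norm (Phi ((Phi ^^ n) \<phi>) s - Phi ((Phi ^^ n) \<psi>) s) \<le> 2 * R / 2 ^ n / 2 * exp (\<mu> * (s - t0))"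
      by (rule Phi_contraction[OF weight admissible_Phi_iterate[OF \<open>admissible \<phi>\<close>]
            admissible_Phi_iterate[OF \<open>admissible \<psi>\<close>] _ _ s])
        (use Suc R_nonneg in auto)
    then show "norm ((Phi ^^ Suc n) \<phi> s - (Phi ^^ Suc n) \<psi> s) \<le> 2 * R / 2 ^ Suc n * exp (\<mu> * (s - t0))"
      by simp
  qed
qed

lemma Phi_iterate_fixed:
  assumes "\<And>t. t \<in> {t0..c} \<Longrightarrow> Phi \<phi> t = \<phi> t" "t \<in> {t0..c}"
  shows "(Phi ^^ n) \<phi> t = \<phi> t"
  using assms(2)
proof (induction n arbitrary: t)
  case (Suc n)
  then show ?case
    using Phi_cong[of "(Phi ^^ n) \<phi>" \<phi> t] assms(1) by simp
qed simp

lemma weight_exists: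
  obtains \<mu> where "0 < \<mu>"
    "\<And>t. t \<in> {t0..c} \<Longrightarrow> L * integral {t0..t} (\<lambda>s. u_m (t - s) * exp (- \<mu> * (t - s))) \<le> 1 / 2"
proof -
  have "0 \<le> c - t0"
    using t0_le_c by simp
  from exp_weighted_kernel_integral_le[OF this L_pos] obtain \<mu> where "0 < \<mu>"
    and weight: "\<And>a t. a \<le> t \<Longrightarrow> t - a \<le> c - t0 \<Longrightarrow>
      L * integral {a..t} (\<lambda>s. u_m (t - s) * exp (- \<mu> * (t - s))) \<le> 1 / 2"
    by blast
  show ?thesis
    by (rule that[OF \<open>0 < \<mu>\<close>]) (use weight in auto)
qed

lemma admissible_uniform_limit:
  assumes "uniform_limit {t0..c} x \<phi> sequentially" "\<And>n. admissible (x n)"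
  shows "admissible \<phi>"
  unfolding admissible_def
proof
  show "continuous_on {t0..c} \<phi>"
    by (rule uniform_limit_theorem[OF _ assms(1)]) (use assms(2) in \<open>auto simp: admissible_def\<close>)
  show "\<forall>t\<in>{t0..c}. norm (\<phi> t - f0) \<le> R"
  proof
    fix t assume t: "t \<in> {t0..c}"
    show "norm (\<phi> t - f0) \<le> R"
      by (rule Lim_norm_ubound[OF _ tendsto_diff[OF tendsto_uniform_limitI[OF assms(1) t] tendsto_const]])
        (use assms(2) t in \<open>auto simp: admissible_def\<close>)
  qed
qed

lemma Phi_tendsto_of_uniform_limit:
  assumes weight: "\<And>t. t \<in> {t0..c} \<Longrightarrow> L * integral {t0..t} (\<lambda>s. u_m (t - s) * exp (- \<mu> * (t - s))) \<le> 1 / 2"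
    and "0 \<le> \<mu>" and lim: "uniform_limit {t0..c} x \<phi> sequentially"
    and adm: "\<And>n. admissible (x n)" "admissible \<phi>" and t: "t \<in> {t0..c}"
  shows "(\<lambda>n. Phi (x n) t) \<longlonglongrightarrow> Phi \<phi> t"
proof (rule tendstoI)
  fix e :: real assume "0 < e"
  define E where "E = exp (\<mu> * (c - t0))"
  have "1 \<le> E"
    using t0_le_c \<open>0 \<le> \<mu>\<close> by (simp add: E_def)
  then have "eventually (\<lambda>n. \<forall>s\<in>{t0..c}. dist (x n s) (\<phi> s) < e / E) sequentially"
    using uniform_limitD[OF lim] \<open>0 < e\<close> by simp
  then show "eventually (\<lambda>n. dist (Phi (x n) t) (Phi \<phi> t) < e) sequentially"
  proof eventually_elim
    case (elim n)
    have "norm (Phi (x n) t - Phi \<phi> t) \<le> e / E / 2 * exp (\<mu> * (t - t0))"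
    proof (rule Phi_contraction[OF weight adm _ _ t])
      show "0 \<le> e / E"
        using \<open>0 < e\<close> \<open>1 \<le> E\<close> by simp
      fix s assume s: "s \<in> {t0..c}"
      then have "norm (x n s - \<phi> s) \<le> e / E"
        using elim by (simp add: dist_norm less_imp_le)
      also have "\<dots> \<le> e / E * exp (\<mu> * (s - t0))"
        using s \<open>0 < e\<close> \<open>1 \<le> E\<close> \<open>0 \<le> \<mu>\<close> by (intro le_mult_exp) auto
      finally show "norm (x n s - \<phi> s) \<le> e / E * exp (\<mu> * (s - t0))" .
    qed
    also have "\<dots> \<le> e / E / 2 * E"
      using t \<open>0 < e\<close> \<open>1 \<le> E\<close> \<open>0 \<le> \<mu>\<close> by (intro mult_left_mono) (auto simp: E_def mult_left_mono)
    also have "\<dots> < e"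
      using \<open>0 < e\<close> \<open>1 \<le> E\<close> by simp
    finally show ?case
      by (simp add: dist_norm)
  qed
qed

lemma fixed_point_exists: "\<exists>\<phi>. admissible \<phi> \<and> (\<forall>t\<in>{t0..c}. Phi \<phi> t = \<phi> t)"
proof -
  obtain \<mu> where "0 < \<mu>" and weight:
    "\<And>t. t \<in> {t0..c} \<Longrightarrow> L * integral {t0..t} (\<lambda>s. u_m (t - s) * exp (- \<mu> * (t - s))) \<le> 1 / 2"
    using weight_exists by blast
  define x where "x n = (Phi ^^ n) (\<lambda>_. f0)" for n
  have adm: "admissible (x n)" for n
    unfolding x_def by (rule admissible_Phi_iterate[OF admissible_const])
  have "norm (x (Suc n) s - x n s) \<le> 2 * R * exp (\<mu> * (c - t0)) * (1 / 2) ^ n"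
    if "s \<in> {t0..c}" for n s
  proof -
    have "x (Suc n) = (Phi ^^ n) (Phi (\<lambda>_. f0))"
      by (simp only: x_def funpow_Suc_right comp_apply)
    then have "norm (x (Suc n) s - x n s) \<le> 2 * R / 2 ^ n * exp (\<mu> * (s - t0))"
      using Phi_iterate_dist[OF weight _ admissible_Phi[OF admissible_const] admissible_const] \<open>0 < \<mu>\<close> that
      by (simp add: x_def)
    also have "\<dots> \<le> 2 * R / 2 ^ n * exp (\<mu> * (c - t0))"
      using that \<open>0 < \<mu>\<close> R_nonneg by (intro mult_left_mono) auto
    finally show ?thesis
      by (simp add: power_one_over)
  qed
  moreover have "summable (\<lambda>n. 2 * R * exp (\<mu> * (c - t0)) * (1 / 2) ^ n)"
    by (intro summable_mult summable_geometric) simp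
  ultimately obtain \<phi> where lim: "uniform_limit {t0..c} x \<phi> sequentially"
    by (rule uniform_limit_of_summable_increments)
  have "admissible \<phi>"
    using lim adm by (rule admissible_uniform_limit)
  moreover have "Phi \<phi> t = \<phi> t" if t: "t \<in> {t0..c}" for t
  proof (rule LIMSEQ_unique)
    show "(\<lambda>n. Phi (x n) t) \<longlonglongrightarrow> Phi \<phi> t"
      using \<open>0 < \<mu>\<close> by (intro Phi_tendsto_of_uniform_limit[OF weight _ lim adm \<open>admissible \<phi>\<close> t]) auto
    show "(\<lambda>n. Phi (x n) t) \<longlonglongrightarrow> \<phi> t"
      using LIMSEQ_Suc[OF tendsto_uniform_limitI[OF lim t]] by (simp add: x_def)
  qed
  ultimately show ?thesis
    by blast
qed

lemma fixed_point_unique: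
  assumes "admissible \<phi>" "admissible \<psi>"
    and "\<And>t. t \<in> {t0..c} \<Longrightarrow> Phi \<phi> t = \<phi> t" "\<And>t. t \<in> {t0..c} \<Longrightarrow> Phi \<psi> t = \<psi> t"
    and t: "t \<in> {t0..c}"
  shows "\<phi> t = \<psi> t"
proof -
  obtain \<mu> where "0 < \<mu>" and weight:
    "\<And>t. t \<in> {t0..c} \<Longrightarrow> L * integral {t0..t} (\<lambda>s. u_m (t - s) * exp (- \<mu> * (t - s))) \<le> 1 / 2"
    using weight_exists by blast
  have "norm (\<phi> t - \<psi> t) \<le> 2 * R * exp (\<mu> * (t - t0)) / 2 ^ n" for n
  proof -
    have "norm ((Phi ^^ n) \<phi> t - (Phi ^^ n) \<psi> t) \<le> 2 * R / 2 ^ n * exp (\<mu> * (t - t0))"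
      using Phi_iterate_dist[OF weight _ assms(1,2)] \<open>0 < \<mu>\<close> t by simp
    then show ?thesis
      using Phi_iterate_fixed[OF assms(3) t] Phi_iterate_fixed[OF assms(4) t] by simp
  qed
  moreover have "(\<lambda>n. 2 * R * exp (\<mu> * (t - t0)) / 2 ^ n) \<longlonglongrightarrow> 0"
    by (rule LIMSEQ_divide_realpow_zero) simp
  ultimately have "norm (\<phi> t - \<psi> t) \<le> 0"
    by (intro LIMSEQ_le_const) auto
  then show ?thesis
    by simp
qed

lemma Phi_fixed_iff_has_integral:
  assumes "admissible \<phi>" "t \<in> {t0..c}"
  shows "Phi \<phi> t = \<phi> t \<longleftrightarrow> ((\<lambda>s. Em (t - s) (P (\<phi> s) s)) has_integral (\<phi> t - SF (t - t0) f0)) {t0..t}"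
proof -
  have "(\<lambda>s. Em (t - s) (P (\<phi> s) s)) integrable_on {t0..t}"
    using assms by (intro integrable_kernel continuous_on_subset[OF continuous_on_P_comp]) auto
  then show ?thesis
    unfolding has_integral_integrable_integral Phi_def by (simp add: eq_diff_eq add.commute)
qed

theorem solution_exists:
  "\<exists>\<phi>. continuous_on {t0..c} \<phi> \<and> (\<forall>t\<in>{t0..c}. norm (\<phi> t - f0) \<le> R) \<and>
    (\<forall>t\<in>{t0..c}. ((\<lambda>s. Em (t - s) (P (\<phi> s) s)) has_integral (\<phi> t - SF (t - t0) f0)) {t0..t})"
proof -
  obtain \<phi> where "admissible \<phi>" "\<forall>t\<in>{t0..c}. Phi \<phi> t = \<phi> t"
    using fixed_point_exists by blast
  then show ?thesis
    using Phi_fixed_iff_has_integral[OF \<open>admissible \<phi>\<close>] unfolding admissible_def by blast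
qed

theorem solution_unique:
  assumes "continuous_on {t0..c} \<phi>" "\<forall>t\<in>{t0..c}. norm (\<phi> t - f0) \<le> R"
    "\<forall>t\<in>{t0..c}. ((\<lambda>s. Em (t - s) (P (\<phi> s) s)) has_integral (\<phi> t - SF (t - t0) f0)) {t0..t}"
    and "continuous_on {t0..c} \<psi>" "\<forall>t\<in>{t0..c}. norm (\<psi> t - f0) \<le> R"
    "\<forall>t\<in>{t0..c}. ((\<lambda>s. Em (t - s) (P (\<psi> s) s)) has_integral (\<psi> t - SF (t - t0) f0)) {t0..t}"
    and "t \<in> {t0..c}"
  shows "\<phi> t = \<psi> t"
proof (rule fixed_point_unique)
  show "admissible \<phi>" "admissible \<psi>"
    using assms by (simp_all add: admissible_def)
  then show "Phi \<phi> s = \<phi> s" "Phi \<psi> s = \<psi> s" if "s \<in> {t0..c}" for s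
    using assms(3,6) that by (simp_all add: Phi_fixed_iff_has_integral)
qed fact

end

section \<open>The Volterra problem\<close>

lemma continuous_on_Ico_e_of_Icc:
  assumes "\<And>c. t0 \<le> c \<Longrightarrow> ereal c < T \<Longrightarrow> continuous_on {t0..c} \<phi>"
  shows "continuous_on (Ico_e t0 T) \<phi>"
  unfolding continuous_on_eq_continuous_within
proof
  fix x assume x: "x \<in> Ico_e t0 T"
  obtain c where "x < c" "ereal c < T"
    using ereal_dense2[of "ereal x" T] x by (auto simp: Ico_e_def)
  have "t0 \<le> x"
    using x by (simp add: Ico_e_def)
  then have "continuous (at x within {t0..c}) \<phi>"
    using assms[of c] \<open>x < c\<close> \<open>ereal c < T\<close> by (simp add: continuous_on_eq_continuous_within)
  moreover have "at x within Ico_e t0 T = at x within {t0..c}"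
    by (rule at_within_nhd[of _ "{..<c}"])
      (use \<open>x < c\<close> \<open>ereal c < T\<close> in \<open>auto simp: Ico_e_def intro: le_less_trans[of _ "ereal c"]\<close>)
  ultimately show "continuous (at x within Ico_e t0 T) \<phi>"
    by simp
qed

lemma Ico_e_ereal: "Ico_e a (ereal b) = {a..<b}"
  by (auto simp: Ico_e_def)

lemma ball_e_ereal: "ball_e x (ereal r) = ball x r"
  by (auto simp: ball_e_def dist_commute)

locale volterra_setting = singular_kernel Em u_m \<sigma>
  for Em :: "real \<Rightarrow> 'm::banach \<Rightarrow> 'f::banach" and u_m \<sigma> +
  fixes SF :: "real \<Rightarrow> 'f \<Rightarrow> 'f" and P :: "'f \<Rightarrow> real \<Rightarrow> 'm" and D :: "('f \<times> real) set"
  assumes SF_continuous: "continuous_on (UNIV \<times> {0..}) (\<lambda>(f, t). SF t f)"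
    and SF_zero: "\<And>f. SF 0 f = f"
    and D_semi_open: "\<And>g s. (g, s) \<in> D \<Longrightarrow>
      \<exists>\<delta> r::ereal. 0 < \<delta> \<and> 0 < r \<and> ball_e g r \<times> Ico_e s (ereal s + \<delta>) \<subseteq> D"
    and P_Lipschitz_on_compact: "\<And>C. closed C \<Longrightarrow> bounded C \<Longrightarrow> C \<subseteq> D \<Longrightarrow>
      \<exists>L M. 0 \<le> L \<and> 0 \<le> M \<and> (\<forall>(f, t)\<in>C. \<forall>(f', t')\<in>C.
        norm (P f t - P f' t') \<le> L * norm (f - f') + M * \<bar>t - t'\<bar>)"
begin

lemma continuous_on_SF_shift:
  assumes "\<And>t. t \<in> A \<Longrightarrow> t0 \<le> t"
  shows "continuous_on A (\<lambda>t. SF (t - t0) f0)"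
proof -
  have "continuous_on A (\<lambda>t. (\<lambda>(f, t). SF t f) (f0, t - t0))"
    by (rule continuous_on_compose2[OF SF_continuous]) (use assms in \<open>auto intro!: continuous_intros\<close>)
  then show ?thesis
    by simp
qed

lemma Lipschitz_on_cylinder:
  assumes "cball f0 \<rho> \<times> {t0..c} \<subseteq> D"
  obtains L where "0 < L" "\<And>f f' t t'. f \<in> cball f0 \<rho> \<Longrightarrow> f' \<in> cball f0 \<rho> \<Longrightarrow> t \<in> {t0..c} \<Longrightarrow>
    t' \<in> {t0..c} \<Longrightarrow> norm (P f t - P f' t') \<le> L * norm (f - f') + L * \<bar>t - t'\<bar>"
proof -
  obtain L M where "0 \<le> L" "0 \<le> M" and LM: "\<forall>(f, t)\<in>cball f0 \<rho> \<times> {t0..c}. \<forall>(f', t')\<in>cball f0 \<rho> \<times> {t0..c}.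
      norm (P f t - P f' t') \<le> L * norm (f - f') + M * \<bar>t - t'\<bar>"
    using P_Lipschitz_on_compact[OF closed_Times[OF closed_cball closed_atLeastAtMost]
        bounded_Times[OF bounded_cball compact_imp_bounded[OF compact_Icc]] assms]
    by blast
  show ?thesis
  proof (rule that[of "max L M + 1"])
    fix f f' t t' assume "f \<in> cball f0 \<rho>" "f' \<in> cball f0 \<rho>" "t \<in> {t0..c}" "t' \<in> {t0..c}"
    then have "norm (P f t - P f' t') \<le> L * norm (f - f') + M * \<bar>t - t'\<bar>"
      using LM by fastforce
    also have "\<dots> \<le> (max L M + 1) * norm (f - f') + (max L M + 1) * \<bar>t - t'\<bar>"
      by (intro add_mono mult_right_mono) auto
    finally show "norm (P f t - P f' t') \<le> (max L M + 1) * norm (f - f') + (max L M + 1) * \<bar>t - t'\<bar>" .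
  qed (use \<open>0 \<le> L\<close> in auto)
qed

lemma cylinder_in_domain:
  assumes "(f0, t0) \<in> D"
  obtains \<rho> d where "0 < \<rho>" "0 < d" "cball f0 \<rho> \<times> {t0..t0 + d} \<subseteq> D"
proof -
  obtain \<delta> r :: ereal where "0 < \<delta>" "0 < r" and sub: "ball_e f0 r \<times> Ico_e t0 (ereal t0 + \<delta>) \<subseteq> D"
    using D_semi_open[OF assms] by blast
  obtain \<rho> where "0 < \<rho>" "ereal \<rho> < r"
    using ereal_dense2[OF \<open>0 < r\<close>] by auto
  obtain d where "0 < d" "ereal d < \<delta>"
    using ereal_dense2[OF \<open>0 < \<delta>\<close>] by auto
  have "cball f0 \<rho> \<times> {t0..t0 + d} \<subseteq> D"
  proof (rule subset_trans[OF _ sub], rule subsetI)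
    fix x assume "x \<in> cball f0 \<rho> \<times> {t0..t0 + d}"
    then obtain f t where x: "x = (f, t)" "dist f f0 \<le> \<rho>" "t0 \<le> t" "t \<le> t0 + d"
      by (auto simp: dist_commute)
    have "f \<in> ball_e f0 r"
      using x(2) \<open>ereal \<rho> < r\<close> by (auto simp: ball_e_def intro: le_less_trans[of _ "ereal \<rho>"])
    moreover have "t \<in> Ico_e t0 (ereal t0 + \<delta>)"
      using x(3,4) \<open>ereal d < \<delta>\<close> by (cases \<delta>) (auto simp: Ico_e_def)
    ultimately show "x \<in> ball_e f0 r \<times> Ico_e t0 (ereal t0 + \<delta>)"
      using x(1) by simp
  qed
  with \<open>0 < \<rho>\<close> \<open>0 < d\<close> show ?thesis
    using that by blast
qed

lemma local_data_exists:
  assumes "(f0, t0) \<in> D"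
  shows "\<exists>R' T' Er ell. local_data SF Em P D f0 t0 R' T' Er ell"
proof -
  obtain \<rho> d where "0 < \<rho>" "0 < d" and cylinder: "cball f0 \<rho> \<times> {t0..t0 + d} \<subseteq> D"
    using cylinder_in_domain[OF assms] by blast
  obtain L where "0 < L" and Lip: "\<And>f f' t t'. f \<in> cball f0 \<rho> \<Longrightarrow> f' \<in> cball f0 \<rho> \<Longrightarrow>
      t \<in> {t0..t0 + d} \<Longrightarrow> t' \<in> {t0..t0 + d} \<Longrightarrow> norm (P f t - P f' t') \<le> L * norm (f - f') + L * \<bar>t - t'\<bar>"
    using Lipschitz_on_cylinder[OF cylinder] by blast
  have P0_Lip: "norm (P f0 s - P f0 s') \<le> L * \<bar>s - s'\<bar>" if "s \<in> {t0..t0 + d}" "s' \<in> {t0..t0 + d}" for s s'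
    using Lip[OF _ _ that, of f0 f0] \<open>0 < \<rho>\<close> by simp
  define M where "M = norm (P f0 t0) + L * d"
  have P0_bound: "norm (P f0 s) \<le> M" if "s \<in> {t0..t0 + d}" for s
    using P0_Lip[OF that, of t0] norm_triangle_sub[of "P f0 s" "P f0 t0"] that \<open>0 < L\<close> \<open>0 < d\<close>
    unfolding M_def by (smt (verit, best) atLeastAtMost_iff mult_left_mono)
  have "0 \<le> M"
    using \<open>0 < L\<close> \<open>0 < d\<close> by (simp add: M_def)
  have P0_cont: "continuous_on {t0..t0 + d} (\<lambda>s. P f0 s)"
    by (rule lipschitz_on_continuous_on[of L], rule lipschitz_onI)
      (use P0_Lip \<open>0 < L\<close> in \<open>auto simp: dist_norm dist_real_def\<close>)
  obtain K where "0 < K" and K: "\<And>\<tau>. 0 < \<tau> \<Longrightarrow> \<tau> \<le> d \<Longrightarrow> u_m \<tau> \<le> K * \<tau> powr (\<sigma> - 1)"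
    using kernel_bound by blast
  define Er where "Er t = norm (f0 - SF (t - t0) f0) + K * M * (t - t0) powr \<sigma> / \<sigma>" for t
  have "local_data SF Em P D f0 t0 (ereal \<rho>) (ereal (t0 + d)) Er (\<lambda>r t. L * r)"
    unfolding local_data_def Ico_e_ereal ball_e_ereal
  proof (intro conjI)
    show "ball f0 \<rho> \<times> {t0..<t0 + d} \<subseteq> D"
      using cylinder by auto
    show "continuous_on {t0..<t0 + d} Er"
      unfolding Er_def using \<sigma>_pos
      by (intro continuous_intros continuous_on_SF_shift continuous_on_powr') auto
    show "\<forall>t\<in>{t0..<t0 + d}. 0 \<le> Er t"
      using \<open>0 < K\<close> \<open>0 \<le> M\<close> \<sigma>_pos by (simp add: Er_def)
    show "Er t0 = 0"
      using \<sigma>_pos by (simp add: Er_def SF_zero)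
    show "\<forall>t\<in>{t0..<t0 + d}. norm (f0 - SF (t - t0) f0 - integral {t0..t} (\<lambda>s. Em (t - s) (P f0 s))) \<le> Er t"
    proof
      fix t assume t: "t \<in> {t0..<t0 + d}"
      have "norm (integral {t0..t} (\<lambda>s. Em (t - s) (P f0 s))) \<le> K * M * (t - t0) powr \<sigma> / \<sigma>"
      proof (rule norm_integral_le_kernel_bound[OF _ _ \<open>0 \<le> M\<close>])
        show "(\<lambda>s. Em (t - s) (P f0 s)) integrable_on {t0..t}"
          using t by (intro integrable_kernel continuous_on_subset[OF P0_cont]) auto
        show "u_m \<tau> \<le> K * \<tau> powr (\<sigma> - 1)" if "0 < \<tau>" "\<tau> \<le> t - t0" for \<tau>
          using that t by (intro K) auto
        show "norm (Em (t - s) (P f0 s)) \<le> u_m (t - s) * M" if "s \<in> {t0<..<t}" for s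
          using that t norm_Em_le[of "t - s" "P f0 s"] P0_bound[of s] u_m_pos[of "t - s"]
          by (force intro: order_trans mult_left_mono)
      qed (use t in auto)
      then show "norm (f0 - SF (t - t0) f0 - integral {t0..t} (\<lambda>s. Em (t - s) (P f0 s))) \<le> Er t"
        unfolding Er_def by (rule order_trans[OF norm_triangle_ineq4 add_left_mono])
    qed
    show "continuous_on ({0..<\<rho>} \<times> {t0..<t0 + d}) (\<lambda>(r, t). L * r)"
      by (simp add: case_prod_beta) (intro continuous_intros)
    show "\<forall>r\<in>{0..<\<rho>}. \<forall>t\<in>{t0..<t0 + d}. 0 \<le> L * r"
      using \<open>0 < L\<close> by simp
    show "\<forall>t\<in>{t0..<t0 + d}. mono_on {0..<\<rho>} (\<lambda>r. L * r)"
      using \<open>0 < L\<close> by (auto intro!: mono_onI mult_left_mono)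
    show "\<forall>f\<in>ball f0 \<rho>. \<forall>t\<in>{t0..<t0 + d}. norm (P f t - P f0 t) \<le> L * norm (f - f0)"
    proof (intro ballI)
      fix f t assume "f \<in> ball f0 \<rho>" "t \<in> {t0..<t0 + d}"
      then show "norm (P f t - P f0 t) \<le> L * norm (f - f0)"
        using Lip[of f f0 t t] \<open>0 < \<rho>\<close> by simp
    qed
  qed (use \<open>0 < \<rho>\<close> \<open>0 < d\<close> in auto)
  then show ?thesis
    by blast
qed

lemma radius_and_time_exist:
  assumes "local_data SF Em P D f0 t0 R' T' Er ell"
  shows "\<exists>R T. 0 < R \<and> ereal R < R' \<and> ereal t0 < T \<and> T \<le> T' \<and>
    (\<forall>t\<in>Ico_e t0 T. Er t + integral {t0..t} (\<lambda>s. u_m (t - s) * ell R s) \<le> R)"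
proof -
  have "0 < R'" "ereal t0 < T'" and Er_cont: "continuous_on (Ico_e t0 T') Er" and "Er t0 = 0"
    and ell_cont: "continuous_on (Ico_e 0 R' \<times> Ico_e t0 T') (\<lambda>(r, t). ell r t)"
    and ell_nonneg: "\<forall>r\<in>Ico_e 0 R'. \<forall>t\<in>Ico_e t0 T'. 0 \<le> ell r t"
    using assms by (simp_all add: local_data_def)
  obtain R where "0 < R" "ereal R < R'"
    using ereal_dense2[OF \<open>0 < R'\<close>] by auto
  obtain t2 where "t0 < t2" "ereal t2 < T'"
    using ereal_dense2[OF \<open>ereal t0 < T'\<close>] by auto
  have sub: "{t0..t2} \<subseteq> Ico_e t0 T'"
    using \<open>ereal t2 < T'\<close> by (auto simp: Ico_e_def intro: le_less_trans[of _ "ereal t2"])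
  have "R \<in> Ico_e 0 R'"
    using \<open>0 < R\<close> \<open>ereal R < R'\<close> by (simp add: Ico_e_def)
  then have "continuous_on {t0..t2} (\<lambda>s. (\<lambda>(r, t). ell r t) (R, s))"
    using sub by (intro continuous_on_compose2[OF ell_cont] continuous_intros) auto
  then have ell_R_cont: "continuous_on {t0..t2} (ell R)"
    by simp
  then obtain N where "0 \<le> N" and N: "\<And>s. s \<in> {t0..t2} \<Longrightarrow> norm (ell R s) \<le> N"
    using continuous_on_compact_bound[OF compact_Icc] by blast
  have "t0 \<in> Ico_e t0 T'"
    using \<open>ereal t0 < T'\<close> by (simp add: Ico_e_def)
  moreover have "0 < R / 2"
    using \<open>0 < R\<close> by simp
  ultimately obtain \<eta> where "0 < \<eta>"
    and \<eta>: "\<And>t. t \<in> Ico_e t0 T' \<Longrightarrow> dist t t0 < \<eta> \<Longrightarrow> dist (Er t) (Er t0) < R / 2"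
    using Er_cont unfolding continuous_on_iff by blast
  obtain K where "0 < K" and K: "\<And>\<tau>. 0 < \<tau> \<Longrightarrow> \<tau> \<le> t2 - t0 \<Longrightarrow> u_m \<tau> \<le> K * \<tau> powr (\<sigma> - 1)"
    using kernel_bound by blast
  obtain d where "0 < d" and d: "\<And>h. 0 \<le> h \<Longrightarrow> h < d \<Longrightarrow> K * N / \<sigma> * h powr \<sigma> < R / 2"
    using powr_small_near_zero[OF \<sigma>_pos \<open>0 < R / 2\<close>, of "K * N / \<sigma>"] by blast
  define h where "h = min (min \<eta> (t2 - t0)) d"
  have "0 < h"
    using \<open>0 < \<eta>\<close> \<open>t0 < t2\<close> \<open>0 < d\<close> by (simp add: h_def)
  have "Er t + integral {t0..t} (\<lambda>s. u_m (t - s) * ell R s) \<le> R" if t: "t0 \<le> t" "t < t0 + h" for t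
  proof -
    have "t \<in> Ico_e t0 T'"
      using t sub by (auto simp: h_def)
    moreover have "dist t t0 < \<eta>"
      using t by (simp add: h_def dist_real_def)
    ultimately have "Er t < R / 2"
      using \<eta>[of t] \<open>Er t0 = 0\<close> by (simp add: dist_real_def abs_less_iff)
    have "integral {t0..t} (\<lambda>s. u_m (t - s) * ell R s) \<le> norm (integral {t0..t} (\<lambda>s. u_m (t - s) * ell R s))"
      by simp
    also have "\<dots> \<le> K * N * (t - t0) powr \<sigma> / \<sigma>"
    proof (rule norm_integral_le_kernel_bound[OF t(1) _ \<open>0 \<le> N\<close>])
      show "(\<lambda>s. u_m (t - s) * ell R s) integrable_on {t0..t}"
        using t by (intro integrable_kernel_real continuous_on_subset[OF ell_R_cont])
          (auto simp: h_def)
      show "u_m \<tau> \<le> K * \<tau> powr (\<sigma> - 1)" if "0 < \<tau>" "\<tau> \<le> t - t0" for \<tau>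
        using that t by (intro K) (auto simp: h_def)
      show "norm (u_m (t - s) * ell R s) \<le> u_m (t - s) * N" if "s \<in> {t0<..<t}" for s
        using that t N[of s] u_m_pos[of "t - s"] by (auto simp: h_def abs_mult intro!: mult_left_mono)
    qed
    also have "\<dots> < R / 2"
      using d[of "t - t0"] t by (simp add: h_def)
    finally show ?thesis
      using \<open>Er t < R / 2\<close> by simp
  qed
  moreover have "ereal (t0 + h) \<le> T'"
    using \<open>ereal t2 < T'\<close> by (intro order_trans[OF _ less_imp_le[OF \<open>ereal t2 < T'\<close>]]) (simp add: h_def)
  ultimately show ?thesis
    using \<open>0 < R\<close> \<open>ereal R < R'\<close> \<open>0 < h\<close>
    by (intro exI[of _ R] exI[of _ "ereal (t0 + h)"]) (auto simp: Ico_e_ereal)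
qed

lemma picard_setting_on_subinterval:
  assumes ld: "local_data SF Em P D f0 t0 R' T' Er ell"
    and "0 < R" "ereal R < R'" "T \<le> T'"
    and budget: "\<forall>t\<in>Ico_e t0 T. Er t + integral {t0..t} (\<lambda>s. u_m (t - s) * ell R s) \<le> R"
    and "t0 \<le> c" "ereal c < T"
  obtains L where "picard_setting Em u_m \<sigma> SF P f0 t0 c R L (ell R)"
proof -
  have D_sub: "ball_e f0 R' \<times> Ico_e t0 T' \<subseteq> D"
    and defect_le: "\<forall>t\<in>Ico_e t0 T'. norm (f0 - SF (t - t0) f0 - integral {t0..t} (\<lambda>s. Em (t - s) (P f0 s))) \<le> Er t"
    and ell_cont: "continuous_on (Ico_e 0 R' \<times> Ico_e t0 T') (\<lambda>(r, t). ell r t)"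
    and ell_mono: "\<forall>t\<in>Ico_e t0 T'. mono_on (Ico_e 0 R') (\<lambda>r. ell r t)"
    and P_dev: "\<forall>f\<in>ball_e f0 R'. \<forall>t\<in>Ico_e t0 T'. norm (P f t - P f0 t) \<le> ell (norm (f - f0)) t"
    using ld by (simp_all add: local_data_def)
  have in_T: "{t0..c} \<subseteq> Ico_e t0 T"
    using \<open>ereal c < T\<close> by (auto simp: Ico_e_def intro: le_less_trans[of _ "ereal c"])
  also have "\<dots> \<subseteq> Ico_e t0 T'"
    using \<open>T \<le> T'\<close> by (auto simp: Ico_e_def intro: less_le_trans)
  finally have in_T': "{t0..c} \<subseteq> Ico_e t0 T'" .
  have in_ball: "f \<in> ball_e f0 R'" if "norm (f - f0) \<le> R" for f
    using that \<open>ereal R < R'\<close> by (auto simp: ball_e_def dist_norm intro: le_less_trans[of _ "ereal R"])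
  have "cball f0 R \<times> {t0..c} \<subseteq> D"
    using D_sub in_T' in_ball by (force simp: dist_norm norm_minus_commute)
  then obtain L where "0 < L" and Lip: "\<And>f f' t t'. f \<in> cball f0 R \<Longrightarrow> f' \<in> cball f0 R \<Longrightarrow>
      t \<in> {t0..c} \<Longrightarrow> t' \<in> {t0..c} \<Longrightarrow> norm (P f t - P f' t') \<le> L * norm (f - f') + L * \<bar>t - t'\<bar>"
    using Lipschitz_on_cylinder by blast
  have R_in: "R \<in> Ico_e 0 R'"
    using \<open>0 < R\<close> \<open>ereal R < R'\<close> by (simp add: Ico_e_def)
  show ?thesis
  proof (rule that, intro picard_setting.intro[OF singular_kernel_axioms] picard_setting_axioms.intro)
    show "continuous_on {t0..c} (\<lambda>t. SF (t - t0) f0)"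
      by (rule continuous_on_SF_shift) auto
    show "norm (P f t - P f' t') \<le> L * norm (f - f') + L * \<bar>t - t'\<bar>"
      if "norm (f - f0) \<le> R" "norm (f' - f0) \<le> R" "t \<in> {t0..c}" "t' \<in> {t0..c}" for f f' t t'
      using that by (intro Lip) (auto simp: dist_norm norm_minus_commute)
    have "continuous_on {t0..c} (\<lambda>s. (\<lambda>(r, t). ell r t) (R, s))"
      using in_T' R_in by (intro continuous_on_compose2[OF ell_cont] continuous_intros) auto
    then show "continuous_on {t0..c} (ell R)"
      by simp
    show "norm (P f t - P f0 t) \<le> ell R t" if "norm (f - f0) \<le> R" "t \<in> {t0..c}" for f t
    proof -
      have "t \<in> Ico_e t0 T'"
        using that in_T' by auto
      then have "norm (P f t - P f0 t) \<le> ell (norm (f - f0)) t"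
        using P_dev in_ball[OF that(1)] by blast
      also have "\<dots> \<le> ell R t"
      proof -
        have "mono_on (Ico_e 0 R') (\<lambda>r. ell r t)"
          using ell_mono \<open>t \<in> Ico_e t0 T'\<close> by blast
        moreover have "norm (f - f0) \<in> Ico_e 0 R'"
          using that(1) \<open>ereal R < R'\<close> by (auto simp: Ico_e_def intro: le_less_trans[of _ "ereal R"])
        ultimately show ?thesis
          using mono_onD R_in that(1) by fastforce
      qed
      finally show ?thesis .
    qed
    show "norm (f0 - SF (t - t0) f0 - integral {t0..t} (\<lambda>s. Em (t - s) (P f0 s)))
        + integral {t0..t} (\<lambda>s. u_m (t - s) * ell R s) \<le> R" if "t \<in> {t0..c}" for t
      using defect_le budget that in_T in_T' by fastforce
  qed (use \<open>t0 \<le> c\<close> \<open>0 < R\<close> \<open>0 < L\<close> in auto)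
qed

lemma VP_solution_exists:
  assumes ld: "local_data SF Em P D f0 t0 R' T' Er ell"
    and R: "0 < R" "ereal R < R'" and T: "ereal t0 < T" "T \<le> T'"
    and budget: "\<forall>t\<in>Ico_e t0 T. Er t + integral {t0..t} (\<lambda>s. u_m (t - s) * ell R s) \<le> R"
  shows "\<exists>\<phi>. VP_solution SF Em P D f0 t0 T \<phi> \<and> (\<forall>t\<in>Ico_e t0 T. norm (\<phi> t - f0) \<le> R)"
proof -
  text \<open>Solutions on \<open>[t0, c]\<close> exist for every \<open>c < T\<close> and are unique, so \<open>sol c t\<close>
    does not depend on \<open>c \<ge> t\<close>.\<close>
  define solves_on where "solves_on c \<phi> \<longleftrightarrow> continuous_on {t0..c} \<phi> \<and> (\<forall>t\<in>{t0..c}. norm (\<phi> t - f0) \<le> R) \<and>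
    (\<forall>t\<in>{t0..c}. ((\<lambda>s. Em (t - s) (P (\<phi> s) s)) has_integral (\<phi> t - SF (t - t0) f0)) {t0..t})" for c \<phi>
  have picard: "\<exists>L. picard_setting Em u_m \<sigma> SF P f0 t0 c R L (ell R)" if "t0 \<le> c" "ereal c < T" for c
    using picard_setting_on_subinterval[OF ld R T(2) budget that] by blast
  have below_T: "ereal t < T" if "t \<le> c" "ereal c < T" for t c
    using that by (auto intro: le_less_trans[of _ "ereal c"])
  define sol where "sol c = (SOME \<phi>. solves_on c \<phi>)" for c
  have sol: "solves_on c (sol c)" if c: "t0 \<le> c" "ereal c < T" for c
  proof -
    obtain L where "picard_setting Em u_m \<sigma> SF P f0 t0 c R L (ell R)"
      using picard[OF c] by blast
    then have "\<exists>\<phi>. solves_on c \<phi>"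
      unfolding solves_on_def by (rule picard_setting.solution_exists)
    then show ?thesis
      unfolding sol_def by (rule someI_ex)
  qed
  have agree: "sol c t = sol t t" if ct: "t0 \<le> t" "t \<le> c" "ereal c < T" for c t
  proof -
    obtain L where pc: "picard_setting Em u_m \<sigma> SF P f0 t0 t R L (ell R)"
      using picard[OF ct(1) below_T[OF ct(2,3)]] by blast
    have "solves_on t (sol c)"
      using sol[OF order_trans[OF ct(1,2)] ct(3)] ct(2)
      by (auto simp: solves_on_def intro: continuous_on_subset)
    moreover have "solves_on t (sol t)"
      using sol[OF ct(1) below_T[OF ct(2,3)]] .
    ultimately show ?thesis
      using ct(1) unfolding solves_on_def by (intro picard_setting.solution_unique[OF pc]) auto
  qed
  define \<phi> where "\<phi> t = sol t t" for t
  have \<phi>_eq: "\<phi> t = sol c t" if "t0 \<le> t" "t \<le> c" "ereal c < T" for c t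
    using agree[OF that] by (simp add: \<phi>_def)
  have bound: "norm (\<phi> t - f0) \<le> R" if "t \<in> Ico_e t0 T" for t
    using sol[of t] that by (auto simp: \<phi>_def solves_on_def Ico_e_def)
  have "continuous_on (Ico_e t0 T) \<phi>"
  proof (rule continuous_on_Ico_e_of_Icc)
    fix c assume "t0 \<le> c" "ereal c < T"
    then have "continuous_on {t0..c} (sol c)"
      using sol[of c] by (simp add: solves_on_def)
    then show "continuous_on {t0..c} \<phi>"
      by (rule continuous_on_eq) (use \<phi>_eq \<open>ereal c < T\<close> in auto)
  qed
  moreover have "(\<phi> t, t) \<in> D" if "t \<in> Ico_e t0 T" for t
  proof -
    have "ball_e f0 R' \<times> Ico_e t0 T' \<subseteq> D"
      using ld by (simp add: local_data_def)
    moreover have "\<phi> t \<in> ball_e f0 R'"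
      using bound[OF that] \<open>ereal R < R'\<close>
      by (auto simp: ball_e_def dist_norm intro: le_less_trans[of _ "ereal R"])
    moreover have "t \<in> Ico_e t0 T'"
      using that \<open>T \<le> T'\<close> by (auto simp: Ico_e_def intro: less_le_trans)
    ultimately show ?thesis
      by auto
  qed
  moreover have "((\<lambda>s. Em (t - s) (P (\<phi> s) s)) has_integral (\<phi> t - SF (t - t0) f0)) {t0..t}"
    if "t \<in> Ico_e t0 T" for t
  proof -
    have t: "t0 \<le> t" "ereal t < T"
      using that by (auto simp: Ico_e_def)
    then have "((\<lambda>s. Em (t - s) (P (sol t s) s)) has_integral (sol t t - SF (t - t0) f0)) {t0..t}"
      using sol[OF t] by (simp add: solves_on_def)
    then have "((\<lambda>s. Em (t - s) (P (\<phi> s) s)) has_integral (sol t t - SF (t - t0) f0)) {t0..t}"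
      by (rule has_integral_eq[rotated]) (simp add: \<phi>_eq[OF _ _ t(2)])
    then show ?thesis
      by (simp add: \<phi>_def)
  qed
  ultimately show ?thesis
    using bound T(1) unfolding VP_solution_def by (intro exI[of _ \<phi>]) blast
qed

end

lemma linear_of_injective_image:
  assumes "linear i" "inj i" "linear g" "\<And>x. i (f x) = g x"
  shows "linear f"
proof (rule linearI)
  fix x y and r :: real
  show "f (x + y) = f x + f y"
    using assms by (intro injD[OF \<open>inj i\<close>]) (simp add: linear_add)
  show "f (r *\<^sub>R x) = r *\<^sub>R f x"
    using assms by (intro injD[OF \<open>inj i\<close>]) (simp add: linear_scale)
qed

theorem proposition3p10:
  fixes iP :: "'p::banach \<Rightarrow> 'f::banach"
    and iF :: "'f \<Rightarrow> 'm::banach"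
    and A :: "'p \<Rightarrow> 'm"
    and S :: "real \<Rightarrow> 'm \<Rightarrow> 'm"
    and SF :: "real \<Rightarrow> 'f \<Rightarrow> 'f"
    and Em :: "real \<Rightarrow> 'm \<Rightarrow> 'f"
    and u u_m :: "real \<Rightarrow> real"
    and \<sigma> :: real
    and P :: "'f \<Rightarrow> real \<Rightarrow> 'm"
    and D :: "('f \<times> real) set"
    and f0 :: 'f and t0 :: real
  assumes P1: "dense_embedding iP" "dense_embedding iF"
    and P2: "linear A"
      "\<exists>c C. 0 < c \<and> 0 < C \<and> (\<forall>p. c * norm p \<le> norm (iF (iP p)) + norm (A p)
                                  \<and> norm (iF (iP p)) + norm (A p) \<le> C * norm p)"
    and P3: "generates S (iF \<circ> iP) A"
    and P4: "\<forall>t\<ge>0. \<forall>f. iF (SF t f) = S t (iF f)"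
      "continuous_on (UNIV \<times> {0..}) (\<lambda>(f, t). SF t f)"
      "continuous_on {0..} u" "\<forall>t\<ge>0. 0 < u t"
      "\<forall>t\<ge>0. \<forall>f. norm (SF t f) \<le> u t * norm f"
    and P5: "\<forall>t>0. \<forall>g. iF (Em t g) = S t g"
      "continuous_on (UNIV \<times> {0<..}) (\<lambda>(g, t). Em t g)"
      "continuous_on {0<..} u_m" "\<forall>t>0. 0 < u_m t"
      "\<forall>t>0. \<forall>g. norm (Em t g) \<le> u_m t * norm g"
      "0 < \<sigma>" "\<sigma> \<le> 1"
      "u_m \<in> O[at_right 0](\<lambda>t. t powr (\<sigma> - 1))"
    and P6: "\<forall>(g, s)\<in>D. \<exists>\<delta> r::ereal. 0 < \<delta> \<and> 0 < r \<and>
                 ball_e g r \<times> Ico_e s (ereal s + \<delta>) \<subseteq> D"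
      "\<forall>C. closed C \<and> bounded C \<and> C \<subseteq> D \<longrightarrow>
          (\<exists>L M. 0 \<le> L \<and> 0 \<le> M \<and> (\<forall>(f, t)\<in>C. \<forall>(f', t')\<in>C.
              norm (P f t - P f' t') \<le> L * norm (f - f') + M * \<bar>t - t'\<bar>))"
    and dom: "(f0, t0) \<in> D"
  shows "(\<exists>R' T' Er ell. local_data SF Em P D f0 t0 R' T' Er ell) \<and>
    (\<forall>R' T' Er ell. local_data SF Em P D f0 t0 R' T' Er ell \<longrightarrow>
       (\<exists>R T. 0 < R \<and> ereal R < R' \<and> ereal t0 < T \<and> T \<le> T' \<and>
          (\<forall>t\<in>Ico_e t0 T. Er t + integral {t0..t} (\<lambda>s. u_m (t - s) * ell R s) \<le> R)) \<and>
       (\<forall>R T. 0 < R \<and> ereal R < R' \<and> ereal t0 < T \<and> T \<le> T' \<and>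
          (\<forall>t\<in>Ico_e t0 T. Er t + integral {t0..t} (\<lambda>s. u_m (t - s) * ell R s) \<le> R) \<longrightarrow>
          (\<exists>\<phi>. VP_solution SF Em P D f0 t0 T \<phi> \<and>
               (\<forall>t\<in>Ico_e t0 T. norm (\<phi> t - f0) \<le> R))))"
proof -
  \<comment> \<open>Only (P4)--(P6) enter the argument.\<close>
  have iF: "linear iF" "inj iF"
    using P1(2) by (auto simp: dense_embedding_def bounded_linear.linear)
  have S: "\<And>t. 0 \<le> t \<Longrightarrow> linear (S t)" "S 0 = id"
    using P3 by (auto simp: generates_def c0_semigroup_def bounded_linear.linear)
  have "volterra_setting Em u_m \<sigma> SF P D"
  proof (intro volterra_setting.intro singular_kernel.intro volterra_setting_axioms.intro)
    show "linear (Em t)" if "0 < t" for t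
      using that P5(1) S(1)[of t] by (intro linear_of_injective_image[OF iF]) auto
    show "SF 0 f = f" for f
      using P4(1) S(2) by (intro injD[OF iF(2)]) simp
    show "\<exists>\<delta> r::ereal. 0 < \<delta> \<and> 0 < r \<and> ball_e g r \<times> Ico_e s (ereal s + \<delta>) \<subseteq> D"
      if "(g, s) \<in> D" for g s
      using P6(1) that by blast
    show "\<exists>L M. 0 \<le> L \<and> 0 \<le> M \<and> (\<forall>(f, t)\<in>C. \<forall>(f', t')\<in>C.
        norm (P f t - P f' t') \<le> L * norm (f - f') + M * \<bar>t - t'\<bar>)"
      if "closed C" "bounded C" "C \<subseteq> D" for C
      using P6(2) that by blast
  qed (use P4(2) P5 in auto)
  then interpret volterra_setting Em u_m \<sigma> SF P D .
  show ?thesis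
    using local_data_exists[OF dom] radius_and_time_exist VP_solution_exists by blast
qed

end
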